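(* Let $\mathcal Q$ be a quantaloid and $\Phi:\mathcal E\to\mathcal D$ a $\mathcal Q$-distributor. A $\mathcal Q$-category $\mathcal C$ is equivalent to the Isbell $\mathcal Q$-category $\mathsf I\Phi$ if and only if $\mathcal C$ is total and there are $\mathcal Q$-functors $F:\mathcal E\to\mathcal C$ and $G:\mathcal D\to\mathcal C$ such that (1) $\Phi(X,Y)=\mathcal C(FX,GY)$ for all $X\in\mathrm{ob}\,\mathcal E$, $Y\in\mathrm{ob}\,\mathcal D$; (2) $F$ is dense; (3) $G$ is codense.
   Context: A quantaloid is a category whose hom-sets are complete lattices with composition preserving joins in each variable; $v\le w\swarrow u\iff v\circ u\le w$ and $u\le v\searrow w\iff v\circ u\le w$. A $\mathcal Q$-category: objects with extents $|X|$ and arrows $\mathcal E(X,Y):|X|\to|Y|$ with $1_{|X|}\le\mathcal E(X,X)$, $\mathcal E(Y,Z)\circ\mathcal E(X,Y)\le\mathcal E(X,Z)$; $\mathcal Q$-functors: $|FX|=|X|$, $\mathcal E(X,Y)\le\mathcal C(FX,FY)$. $X\cong Y$ iff $|X|=|Y|$, $1\le\mathcal C(X,Y)$, $1\le\mathcal C(Y,X)$; an equivalence is a $\mathcal Q$-functor that is fully faithful and surjective up to isomorphism. Presheaves of extent $T$: $\varphi_X:|X|\to T$ with $\varphi_X\circ\mathcal E(X',X)\le\varphi_{X'}$, forming $\mathsf P\mathcal E$ with $\mathsf P\mathcal E(\varphi,\psi)=\bigwedge_X\psi_X\swarrow\varphi_X$; covariant presheaves of extent $T$: $\psi_Y:T\to|Y|$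 with $\mathcal D(Y,Y')\circ\psi_Y\le\psi_{Y'}$, forming $\mathsf P^\dagger\mathcal D$ with $\mathsf P^\dagger\mathcal D(\psi,\psi')=\bigwedge_Y\psi'_Y\searrow\psi_Y$. $\mathcal C$ is total if the Yoneda functor $Z\mapsto\mathcal C(-,Z)$ has a left adjoint ($F\dashv G$ iff $\mathcal C(FX,Y)=\mathcal E(X,GY)$). For $\varphi\in\mathsf P\mathcal E$, the weighted colimit $\varphi\star F$ is an object $Z$ with $|Z|=|\varphi|$ and $\mathcal C(Z,W)=\bigwedge_X\mathcal C(FX,W)\swarrow\varphi_X$ for all $W$; $F$ is dense if every object of $\mathcal C$ is isomorphic to $\varphi\star F$ for some $\varphi$. For a covariant presheaf $\psi$ on $\mathcal D$ of extent $T$, the weighted limit of $G$ by $\psi$ is $Z$ with $|Z|=T$ and $\mathcal C(W,Z)=\bigwedge_Y\psi_Y\searrow\mathcal C(W,GY)$ for all $W$; $G$ is codense if every object of $\mathcal C$ is isomorphic to such a weighted limit. A $\mathcal Q$-distributor $\Phi:\mathcal E\to\mathcal D$ is a family $\Phi(X,Y):|X|\to|Y|$ with $\mathcal D(Y,Y')\circ\Phi(X,Y)\circ\mathcal E(X',X)\le\Phi(X',Y')$; $\Phi_\uparrow:\mathsf P\mathcal E\to\mathsf P^\dagger\mathcal D$, $(\Phi_\uparrow\varphi)_Y=\bigwedge_X\Phi(X,Y)\swarrow\varphi_X$; $\Phi^\downarrow:\mathsf P^\dagger\mathcal D\to\mathsf P\mathcal E$, $(\Phi^\downarrow\psi)_X=\bigwedge_Y\psi_Y\searrow\Phi(X,Y)$;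 $\mathsf I\Phi$ is the full $\mathcal Q$-subcategory of $\mathsf P\mathcal E$ on those $\varphi$ with $\Phi^\downarrow\Phi_\uparrow\varphi=\varphi$. *)

theory Defs
  imports Main
begin

text \<open>Every element of
  'a is an arrow with a domain and codomain; qcomp g f is g o f (defined when
  qcod f = qdom g); qle is the order on hom-sets; qsup T T' S is the join of a set
  S of arrows T to T' (taken in the hom-set Hom T T', so empty joins are the bottom).\<close>

record ('o, 'a) quantaloid =
  qdom :: "'a \<Rightarrow> 'o"
  qcod :: "'a \<Rightarrow> 'o"
  qcomp :: "'a \<Rightarrow> 'a \<Rightarrow> 'a"
  qid :: "'o \<Rightarrow> 'a"
  qle :: "'a \<Rightarrow> 'a \<Rightarrow> bool"
  qsup :: "'o \<Rightarrow> 'o \<Rightarrow> 'a set \<Rightarrow> 'a"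

definition qhom :: "('o, 'a, 'z) quantaloid_scheme \<Rightarrow> 'o \<Rightarrow> 'o \<Rightarrow> 'a set" where
  "qhom Q T T' = {f. qdom Q f = T \<and> qcod Q f = T'}"

definition quantaloid :: "('o, 'a, 'z) quantaloid_scheme \<Rightarrow> bool" where
  "quantaloid Q \<longleftrightarrow>
     (\<forall>f g. qdom Q g = qcod Q f \<longrightarrow>
        qdom Q (qcomp Q g f) = qdom Q f \<and> qcod Q (qcomp Q g f) = qcod Q g) \<and>
     (\<forall>f g h. qdom Q g = qcod Q f \<and> qdom Q h = qcod Q g \<longrightarrow>
        qcomp Q h (qcomp Q g f) = qcomp Q (qcomp Q h g) f) \<and>
     (\<forall>T. qdom Q (qid Q T) = T \<and> qcod Q (qid Q T) = T) \<and>
     (\<forall>f. qcomp Q (qid Q (qcod Q f)) f = f \<and> qcomp Q f (qid Q (qdom Q f)) = f) \<and>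
     (\<forall>f g. qle Q f g \<longrightarrow> qdom Q f = qdom Q g \<and> qcod Q f = qcod Q g) \<and>
     (\<forall>f. qle Q f f) \<and>
     (\<forall>f g. qle Q f g \<and> qle Q g f \<longrightarrow> f = g) \<and>
     (\<forall>f g h. qle Q f g \<and> qle Q g h \<longrightarrow> qle Q f h) \<and>
     (\<forall>T T' S. S \<subseteq> qhom Q T T' \<longrightarrow>
        qsup Q T T' S \<in> qhom Q T T' \<and>
        (\<forall>s\<in>S. qle Q s (qsup Q T T' S)) \<and>
        (\<forall>u\<in>qhom Q T T'. (\<forall>s\<in>S. qle Q s u) \<longrightarrow> qle Q (qsup Q T T' S) u)) \<and>
     (\<forall>T T' T'' f S. f \<in> qhom Q T T' \<and> S \<subseteq> qhom Q T' T'' \<longrightarrow>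
        qcomp Q (qsup Q T' T'' S) f = qsup Q T T'' ((\<lambda>g. qcomp Q g f) ` S)) \<and>
     (\<forall>T T' T'' g S. g \<in> qhom Q T' T'' \<and> S \<subseteq> qhom Q T T' \<longrightarrow>
        qcomp Q g (qsup Q T T' S) = qsup Q T T'' (qcomp Q g ` S))"

definition qinf :: "('o, 'a, 'z) quantaloid_scheme \<Rightarrow> 'o \<Rightarrow> 'o \<Rightarrow> 'a set \<Rightarrow> 'a" where
  "qinf Q T T' S = qsup Q T T' {x \<in> qhom Q T T'. \<forall>s\<in>S. qle Q x s}"

definition qlimp :: "('o, 'a, 'z) quantaloid_scheme \<Rightarrow> 'a \<Rightarrow> 'a \<Rightarrow> 'a" where
  "qlimp Q v u = qsup Q (qcod Q u) (qcod Q v)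
     {w \<in> qhom Q (qcod Q u) (qcod Q v). qle Q (qcomp Q w u) v}"

definition qrimp :: "('o, 'a, 'z) quantaloid_scheme \<Rightarrow> 'a \<Rightarrow> 'a \<Rightarrow> 'a" where
  "qrimp Q v w = qsup Q (qdom Q w) (qdom Q v)
     {u \<in> qhom Q (qdom Q w) (qdom Q v). qle Q (qcomp Q v u) w}"

record ('c, 'o, 'a) qcat =
  cob :: "'c set"
  cext :: "'c \<Rightarrow> 'o"
  chom :: "'c \<Rightarrow> 'c \<Rightarrow> 'a"

definition qcategory :: "('o, 'a, 'z) quantaloid_scheme \<Rightarrow> ('c, 'o, 'a) qcat \<Rightarrow> bool" where
  "qcategory Q C \<longleftrightarrow>
     (\<forall>X\<in>cob C. \<forall>Y\<in>cob C. chom C X Y \<in> qhom Q (cext C X) (cext C Y)) \<and>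
     (\<forall>X\<in>cob C. qle Q (qid Q (cext C X)) (chom C X X)) \<and>
     (\<forall>X\<in>cob C. \<forall>Y\<in>cob C. \<forall>Z\<in>cob C.
        qle Q (qcomp Q (chom C Y Z) (chom C X Y)) (chom C X Z))"

definition qfunctor ::
  "('o, 'a, 'z) quantaloid_scheme \<Rightarrow> ('e, 'o, 'a) qcat \<Rightarrow> ('c, 'o, 'a) qcat \<Rightarrow> ('e \<Rightarrow> 'c) \<Rightarrow> bool" where
  "qfunctor Q E C F \<longleftrightarrow>
     (\<forall>X\<in>cob E. F X \<in> cob C \<and> cext C (F X) = cext E X) \<and>
     (\<forall>X\<in>cob E. \<forall>Y\<in>cob E. qle Q (chom E X Y) (chom C (F X) (F Y)))"

definition qiso :: "('o, 'a, 'z) quantaloid_scheme \<Rightarrow> ('c, 'o, 'a) qcat \<Rightarrow> 'c \<Rightarrow> 'c \<Rightarrow> bool" where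
  "qiso Q C X Y \<longleftrightarrow> X \<in> cob C \<and> Y \<in> cob C \<and> cext C X = cext C Y \<and>
     qle Q (qid Q (cext C X)) (chom C X Y) \<and> qle Q (qid Q (cext C X)) (chom C Y X)"

definition qequivalence ::
  "('o, 'a, 'z) quantaloid_scheme \<Rightarrow> ('e, 'o, 'a) qcat \<Rightarrow> ('c, 'o, 'a) qcat \<Rightarrow> ('e \<Rightarrow> 'c) \<Rightarrow> bool" where
  "qequivalence Q E C F \<longleftrightarrow> qfunctor Q E C F \<and>
     (\<forall>X\<in>cob E. \<forall>Y\<in>cob E. chom C (F X) (F Y) = chom E X Y) \<and>
     (\<forall>Z\<in>cob C. \<exists>X\<in>cob E. qiso Q C (F X) Z)"

definition qadjoint ::
  "('o, 'a, 'z) quantaloid_scheme \<Rightarrow> ('e, 'o, 'a) qcat \<Rightarrow> ('c, 'o, 'a) qcat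
     \<Rightarrow> ('e \<Rightarrow> 'c) \<Rightarrow> ('c \<Rightarrow> 'e) \<Rightarrow> bool" where
  "qadjoint Q E C F G \<longleftrightarrow> qfunctor Q E C F \<and> qfunctor Q C E G \<and>
     (\<forall>X\<in>cob E. \<forall>Y\<in>cob C. chom C (F X) Y = chom E X (G Y))"

text \<open>A presheaf on E of extent T is a function on the objects of E (fixed to
  undefined outside cob E); an object of P E is a pair (phi, T).\<close>
definition presheaf ::
  "('o, 'a, 'z) quantaloid_scheme \<Rightarrow> ('e, 'o, 'a) qcat \<Rightarrow> 'o \<Rightarrow> ('e \<Rightarrow> 'a) \<Rightarrow> bool" where
  "presheaf Q E T \<phi> \<longleftrightarrow>
     (\<forall>X\<in>cob E. \<phi> X \<in> qhom Q (cext E X) T) \<and>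
     (\<forall>X. X \<notin> cob E \<longrightarrow> \<phi> X = undefined) \<and>
     (\<forall>X\<in>cob E. \<forall>X'\<in>cob E. qle Q (qcomp Q (\<phi> X) (chom E X' X)) (\<phi> X'))"

definition covpresheaf ::
  "('o, 'a, 'z) quantaloid_scheme \<Rightarrow> ('d, 'o, 'a) qcat \<Rightarrow> 'o \<Rightarrow> ('d \<Rightarrow> 'a) \<Rightarrow> bool" where
  "covpresheaf Q D T \<psi> \<longleftrightarrow>
     (\<forall>Y\<in>cob D. \<psi> Y \<in> qhom Q T (cext D Y)) \<and>
     (\<forall>Y. Y \<notin> cob D \<longrightarrow> \<psi> Y = undefined) \<and>
     (\<forall>Y\<in>cob D. \<forall>Y'\<in>cob D. qle Q (qcomp Q (chom D Y Y') (\<psi> Y)) (\<psi> Y'))"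

definition psh_hom ::
  "('o, 'a, 'z) quantaloid_scheme \<Rightarrow> ('e, 'o, 'a) qcat
     \<Rightarrow> ('e \<Rightarrow> 'a) \<times> 'o \<Rightarrow> ('e \<Rightarrow> 'a) \<times> 'o \<Rightarrow> 'a" where
  "psh_hom Q E p q = qinf Q (snd p) (snd q) {qlimp Q (fst q X) (fst p X) | X. X \<in> cob E}"

definition PSh :: "('o, 'a, 'z) quantaloid_scheme \<Rightarrow> ('e, 'o, 'a) qcat
     \<Rightarrow> (('e \<Rightarrow> 'a) \<times> 'o, 'o, 'a) qcat" where
  "PSh Q E = \<lparr> cob = {(\<phi>, T). presheaf Q E T \<phi>}, cext = snd, chom = psh_hom Q E \<rparr>"

definition yoneda :: "('o, 'a, 'z) quantaloid_scheme \<Rightarrow> ('c, 'o, 'a) qcat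
     \<Rightarrow> 'c \<Rightarrow> ('c \<Rightarrow> 'a) \<times> 'o" where
  "yoneda Q C Z = ((\<lambda>X. if X \<in> cob C then chom C X Z else undefined), cext C Z)"

definition total :: "('o, 'a, 'z) quantaloid_scheme \<Rightarrow> ('c, 'o, 'a) qcat \<Rightarrow> bool" where
  "total Q C \<longleftrightarrow> (\<exists>L. qadjoint Q (PSh Q C) C L (yoneda Q C))"

definition is_wcolim ::
  "('o, 'a, 'z) quantaloid_scheme \<Rightarrow> ('e, 'o, 'a) qcat \<Rightarrow> ('c, 'o, 'a) qcat
     \<Rightarrow> ('e \<Rightarrow> 'c) \<Rightarrow> 'o \<Rightarrow> ('e \<Rightarrow> 'a) \<Rightarrow> 'c \<Rightarrow> bool" where
  "is_wcolim Q E C F T \<phi> Z \<longleftrightarrow> Z \<in> cob C \<and> cext C Z = T \<and>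
     (\<forall>W\<in>cob C. chom C Z W =
        qinf Q T (cext C W) {qlimp Q (chom C (F X) W) (\<phi> X) | X. X \<in> cob E})"

definition dense ::
  "('o, 'a, 'z) quantaloid_scheme \<Rightarrow> ('e, 'o, 'a) qcat \<Rightarrow> ('c, 'o, 'a) qcat \<Rightarrow> ('e \<Rightarrow> 'c) \<Rightarrow> bool" where
  "dense Q E C F \<longleftrightarrow> (\<forall>Z\<in>cob C. \<exists>T \<phi> Z'. presheaf Q E T \<phi> \<and>
       is_wcolim Q E C F T \<phi> Z' \<and> qiso Q C Z Z')"

definition is_wlim ::
  "('o, 'a, 'z) quantaloid_scheme \<Rightarrow> ('d, 'o, 'a) qcat \<Rightarrow> ('c, 'o, 'a) qcat
     \<Rightarrow> ('d \<Rightarrow> 'c) \<Rightarrow> 'o \<Rightarrow> ('d \<Rightarrow> 'a) \<Rightarrow> 'c \<Rightarrow> bool" where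
  "is_wlim Q D C G T \<psi> Z \<longleftrightarrow> Z \<in> cob C \<and> cext C Z = T \<and>
     (\<forall>W\<in>cob C. chom C W Z =
        qinf Q (cext C W) T {qrimp Q (\<psi> Y) (chom C W (G Y)) | Y. Y \<in> cob D})"

definition codense ::
  "('o, 'a, 'z) quantaloid_scheme \<Rightarrow> ('d, 'o, 'a) qcat \<Rightarrow> ('c, 'o, 'a) qcat \<Rightarrow> ('d \<Rightarrow> 'c) \<Rightarrow> bool" where
  "codense Q D C G \<longleftrightarrow> (\<forall>Z\<in>cob C. \<exists>T \<psi> Z'. covpresheaf Q D T \<psi> \<and>
       is_wlim Q D C G T \<psi> Z' \<and> qiso Q C Z Z')"

definition distributor ::
  "('o, 'a, 'z) quantaloid_scheme \<Rightarrow> ('e, 'o, 'a) qcat \<Rightarrow> ('d, 'o, 'a) qcat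
     \<Rightarrow> ('e \<Rightarrow> 'd \<Rightarrow> 'a) \<Rightarrow> bool" where
  "distributor Q E D \<Phi> \<longleftrightarrow>
     (\<forall>X\<in>cob E. \<forall>Y\<in>cob D. \<Phi> X Y \<in> qhom Q (cext E X) (cext D Y)) \<and>
     (\<forall>X\<in>cob E. \<forall>X'\<in>cob E. \<forall>Y\<in>cob D. \<forall>Y'\<in>cob D.
        qle Q (qcomp Q (chom D Y Y') (qcomp Q (\<Phi> X Y) (chom E X' X))) (\<Phi> X' Y'))"

definition dist_up ::
  "('o, 'a, 'z) quantaloid_scheme \<Rightarrow> ('e, 'o, 'a) qcat \<Rightarrow> ('d, 'o, 'a) qcat
     \<Rightarrow> ('e \<Rightarrow> 'd \<Rightarrow> 'a) \<Rightarrow> 'o \<Rightarrow> ('e \<Rightarrow> 'a) \<Rightarrow> ('d \<Rightarrow> 'a)" where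
  "dist_up Q E D \<Phi> T \<phi> = (\<lambda>Y. if Y \<in> cob D then
      qinf Q T (cext D Y) {qlimp Q (\<Phi> X Y) (\<phi> X) | X. X \<in> cob E} else undefined)"

definition dist_down ::
  "('o, 'a, 'z) quantaloid_scheme \<Rightarrow> ('e, 'o, 'a) qcat \<Rightarrow> ('d, 'o, 'a) qcat
     \<Rightarrow> ('e \<Rightarrow> 'd \<Rightarrow> 'a) \<Rightarrow> 'o \<Rightarrow> ('d \<Rightarrow> 'a) \<Rightarrow> ('e \<Rightarrow> 'a)" where
  "dist_down Q E D \<Phi> T \<psi> = (\<lambda>X. if X \<in> cob E then
      qinf Q (cext E X) T {qrimp Q (\<psi> Y) (\<Phi> X Y) | Y. Y \<in> cob D} else undefined)"

definition isbell ::
  "('o, 'a, 'z) quantaloid_scheme \<Rightarrow> ('e, 'o, 'a) qcat \<Rightarrow> ('d, 'o, 'a) qcat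
     \<Rightarrow> ('e \<Rightarrow> 'd \<Rightarrow> 'a) \<Rightarrow> (('e \<Rightarrow> 'a) \<times> 'o, 'o, 'a) qcat" where
  "isbell Q E D \<Phi> = \<lparr> cob = {(\<phi>, T). presheaf Q E T \<phi> \<and>
       dist_down Q E D \<Phi> T (dist_up Q E D \<Phi> T \<phi>) = \<phi>},
     cext = snd, chom = psh_hom Q E \<rparr>"

end

theory Submission
  imports Defs
begin

(* Given an equivalence H : C \<simeq> I\<Phi>, put F X := H^-1(\<Phi>\<down>\<Phi>\<up> E(-,X)) and G Y := H^-1(\<Phi>(-,Y)).
  Both presheaves are closed, so the Yoneda lemma gives C(F X, G Y) = \<Phi>(X,Y), and every object Z
  is the colimit of F weighted by H Z and, since \<Phi>\<up> is fully faithful on closed presheaves, the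
  limit of G weighted by \<Phi>\<up>(H Z). C is total: a presheaf l on C has the colimit
  H^-1(\<Phi>\<down>\<Phi>\<up>(l \<star> H)), where l \<star> H is the colimit in P E computed pointwise.

  Conversely, Z \<mapsto> C(F-,Z) is fully faithful by density of F. Density also gives
  \<Phi>\<up> C(F-,Z) = C(Z,G-) and codensity gives \<Phi>\<down> C(Z,G-) = C(F-,Z), so C(F-,Z) is closed; and a
  closed presheaf \<phi> is C(F-,Z) for the limit Z of G weighted by \<Phi>\<up>\<phi>, which exists as C is total. *)

lemma setcompr_cong: "(\<And>X. X \<in> I \<Longrightarrow> f X = g X) \<Longrightarrow> {f X | X. X \<in> I} = {g X | X. X \<in> I}"
  by (simp add: Setcompr_eq_image)

section \<open>Quantaloids\<close>

locale quantaloid_setting =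
  fixes Q :: "('o, 'a) quantaloid"
  assumes quantaloid: "quantaloid Q"
begin

abbreviation qle_syntax (infix "\<sqsubseteq>" 50) where "f \<sqsubseteq> g \<equiv> qle Q f g"
abbreviation qcomp_syntax (infixr "\<cdot>" 75) where "g \<cdot> f \<equiv> qcomp Q g f"

lemma
  shows quantaloid_qcomp_dom_cod: "\<forall>f g. qdom Q g = qcod Q f \<longrightarrow>
      qdom Q (g \<cdot> f) = qdom Q f \<and> qcod Q (g \<cdot> f) = qcod Q g"
    and quantaloid_assoc: "\<forall>f g h. qdom Q g = qcod Q f \<and> qdom Q h = qcod Q g \<longrightarrow>
      h \<cdot> (g \<cdot> f) = (h \<cdot> g) \<cdot> f"
    and quantaloid_qid: "\<forall>T. qdom Q (qid Q T) = T \<and> qcod Q (qid Q T) = T"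
    and quantaloid_qid_neutral: "\<forall>f. qid Q (qcod Q f) \<cdot> f = f \<and> f \<cdot> qid Q (qdom Q f) = f"
    and quantaloid_qle_dom_cod: "\<forall>f g. f \<sqsubseteq> g \<longrightarrow> qdom Q f = qdom Q g \<and> qcod Q f = qcod Q g"
    and quantaloid_qle_refl: "\<forall>f. f \<sqsubseteq> f"
    and quantaloid_qle_antisym: "\<forall>f g. f \<sqsubseteq> g \<and> g \<sqsubseteq> f \<longrightarrow> f = g"
    and quantaloid_qle_trans: "\<forall>f g h. f \<sqsubseteq> g \<and> g \<sqsubseteq> h \<longrightarrow> f \<sqsubseteq> h"
    and quantaloid_qsup: "\<forall>T T' S. S \<subseteq> qhom Q T T' \<longrightarrow>
      qsup Q T T' S \<in> qhom Q T T' \<and> (\<forall>s\<in>S. s \<sqsubseteq> qsup Q T T' S) \<and>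
      (\<forall>u\<in>qhom Q T T'. (\<forall>s\<in>S. s \<sqsubseteq> u) \<longrightarrow> qsup Q T T' S \<sqsubseteq> u)"
    and quantaloid_qsup_qcomp: "\<forall>T T' T'' f S. f \<in> qhom Q T T' \<and> S \<subseteq> qhom Q T' T'' \<longrightarrow>
      qsup Q T' T'' S \<cdot> f = qsup Q T T'' ((\<lambda>g. g \<cdot> f) ` S)"
    and quantaloid_qcomp_qsup: "\<forall>T T' T'' g S. g \<in> qhom Q T' T'' \<and> S \<subseteq> qhom Q T T' \<longrightarrow>
      g \<cdot> qsup Q T T' S = qsup Q T T'' ((\<lambda>f. g \<cdot> f) ` S)"
  by (insert quantaloid[unfolded quantaloid_def], elim conjE, assumption)+

lemma qcomp_in_qhom: "f \<in> qhom Q A B \<Longrightarrow> g \<in> qhom Q B C \<Longrightarrow> g \<cdot> f \<in> qhom Q A C"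
  using quantaloid_qcomp_dom_cod by (simp add: qhom_def)

lemma qcomp_assoc:
  "f \<in> qhom Q A B \<Longrightarrow> g \<in> qhom Q B C \<Longrightarrow> h \<in> qhom Q C D \<Longrightarrow> h \<cdot> (g \<cdot> f) = (h \<cdot> g) \<cdot> f"
  using quantaloid_assoc by (simp add: qhom_def)

lemma qid_in_qhom: "qid Q A \<in> qhom Q A A"
  using quantaloid_qid by (simp add: qhom_def)

lemma qid_left: "f \<in> qhom Q A B \<Longrightarrow> qid Q B \<cdot> f = f"
  using quantaloid_qid_neutral by (auto simp: qhom_def)

lemma qid_right: "f \<in> qhom Q A B \<Longrightarrow> f \<cdot> qid Q A = f"
  using quantaloid_qid_neutral by (auto simp: qhom_def)

lemma qle_refl: "f \<sqsubseteq> f"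
  using quantaloid_qle_refl by blast

lemma qle_trans [trans]: "f \<sqsubseteq> g \<Longrightarrow> g \<sqsubseteq> h \<Longrightarrow> f \<sqsubseteq> h"
  using quantaloid_qle_trans by blast

lemma qle_antisym: "f \<sqsubseteq> g \<Longrightarrow> g \<sqsubseteq> f \<Longrightarrow> f = g"
  using quantaloid_qle_antisym by blast

lemma qle_in_qhom: "f \<sqsubseteq> g \<Longrightarrow> g \<in> qhom Q A B \<Longrightarrow> f \<in> qhom Q A B"
  using quantaloid_qle_dom_cod by (simp add: qhom_def)

lemma qsup_in_qhom: "S \<subseteq> qhom Q A B \<Longrightarrow> qsup Q A B S \<in> qhom Q A B"
  using quantaloid_qsup by blast

lemma qsup_upper: "S \<subseteq> qhom Q A B \<Longrightarrow> s \<in> S \<Longrightarrow> s \<sqsubseteq> qsup Q A B S"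
  using quantaloid_qsup by blast

lemma qsup_least:
  "S \<subseteq> qhom Q A B \<Longrightarrow> u \<in> qhom Q A B \<Longrightarrow> (\<And>s. s \<in> S \<Longrightarrow> s \<sqsubseteq> u) \<Longrightarrow> qsup Q A B S \<sqsubseteq> u"
  using quantaloid_qsup by blast

lemma qsup_qcomp:
  "f \<in> qhom Q A B \<Longrightarrow> S \<subseteq> qhom Q B C \<Longrightarrow> qsup Q B C S \<cdot> f = qsup Q A C ((\<lambda>g. g \<cdot> f) ` S)"
  using quantaloid_qsup_qcomp by blast

lemma qcomp_qsup:
  "g \<in> qhom Q B C \<Longrightarrow> S \<subseteq> qhom Q A B \<Longrightarrow> g \<cdot> qsup Q A B S = qsup Q A C ((\<lambda>f. g \<cdot> f) ` S)"
  using quantaloid_qcomp_qsup by blast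

lemma qsup_qcomp_le:
  assumes "f \<in> qhom Q A B" "S \<subseteq> qhom Q B C" "u \<in> qhom Q A C" "\<And>s. s \<in> S \<Longrightarrow> s \<cdot> f \<sqsubseteq> u"
  shows "qsup Q B C S \<cdot> f \<sqsubseteq> u"
  unfolding qsup_qcomp[OF assms(1,2)]
  by (rule qsup_least) (use assms qcomp_in_qhom in auto)

lemma qcomp_qsup_le:
  assumes "g \<in> qhom Q B C" "S \<subseteq> qhom Q A B" "u \<in> qhom Q A C" "\<And>s. s \<in> S \<Longrightarrow> g \<cdot> s \<sqsubseteq> u"
  shows "g \<cdot> qsup Q A B S \<sqsubseteq> u"
  unfolding qcomp_qsup[OF assms(1,2)]
  by (rule qsup_least) (use assms qcomp_in_qhom in auto)

lemma qsup_pair: assumes "f \<sqsubseteq> f'" "f' \<in> qhom Q A B" shows "qsup Q A B {f, f'} = f'"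
proof -
  have S: "{f, f'} \<subseteq> qhom Q A B" using assms qle_in_qhom by auto
  show ?thesis
  proof (rule qle_antisym)
    show "qsup Q A B {f, f'} \<sqsubseteq> f'"
      by (rule qsup_least[OF S assms(2)]) (use assms(1) qle_refl in auto)
    show "f' \<sqsubseteq> qsup Q A B {f, f'}" by (rule qsup_upper[OF S]) simp
  qed
qed

lemma qcomp_mono_right:
  assumes "f \<sqsubseteq> f'" "f' \<in> qhom Q A B" "g \<in> qhom Q B C" shows "g \<cdot> f \<sqsubseteq> g \<cdot> f'"
proof -
  have S: "{f, f'} \<subseteq> qhom Q A B" using assms qle_in_qhom by auto
  have "g \<cdot> f' = qsup Q A C ((\<lambda>f. g \<cdot> f) ` {f, f'})"
    using qcomp_qsup[OF assms(3) S] qsup_pair[OF assms(1,2)] by simp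
  moreover have "(\<lambda>f. g \<cdot> f) ` {f, f'} \<subseteq> qhom Q A C" using S assms(3) qcomp_in_qhom by blast
  ultimately show ?thesis using qsup_upper by (metis insertI1 image_insert)
qed

lemma qcomp_mono_left:
  assumes "g \<sqsubseteq> g'" "g' \<in> qhom Q B C" "f \<in> qhom Q A B" shows "g \<cdot> f \<sqsubseteq> g' \<cdot> f"
proof -
  have S: "{g, g'} \<subseteq> qhom Q B C" using assms qle_in_qhom by auto
  have "g' \<cdot> f = qsup Q A C ((\<lambda>g. g \<cdot> f) ` {g, g'})"
    using qsup_qcomp[OF assms(3) S] qsup_pair[OF assms(1,2)] by simp
  moreover have "(\<lambda>g. g \<cdot> f) ` {g, g'} \<subseteq> qhom Q A C" using S assms(3) qcomp_in_qhom by blast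
  ultimately show ?thesis using qsup_upper by (metis insertI1 image_insert)
qed

lemma qle_qcomp_right_if_qid_le:
  "qid Q A \<sqsubseteq> a \<Longrightarrow> a \<in> qhom Q A A \<Longrightarrow> f \<in> qhom Q A B \<Longrightarrow> f \<sqsubseteq> f \<cdot> a"
  using qcomp_mono_right[of "qid Q A" a A A f B] qid_right by simp

lemma qle_qcomp_left_if_qid_le:
  "qid Q B \<sqsubseteq> a \<Longrightarrow> a \<in> qhom Q B B \<Longrightarrow> f \<in> qhom Q A B \<Longrightarrow> f \<sqsubseteq> a \<cdot> f"
  using qcomp_mono_left[of "qid Q B" a B B f A] qid_left by simp

lemma qinf_in_qhom: "qinf Q A B S \<in> qhom Q A B"
  unfolding qinf_def by (rule qsup_in_qhom) auto

lemma qinf_lower: "S \<subseteq> qhom Q A B \<Longrightarrow> s \<in> S \<Longrightarrow> qinf Q A B S \<sqsubseteq> s"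
  unfolding qinf_def by (rule qsup_least) auto

lemma qinf_greatest: "u \<in> qhom Q A B \<Longrightarrow> (\<And>s. s \<in> S \<Longrightarrow> u \<sqsubseteq> s) \<Longrightarrow> u \<sqsubseteq> qinf Q A B S"
  unfolding qinf_def by (rule qsup_upper) auto

lemma qlimp_in_qhom: "u \<in> qhom Q A B \<Longrightarrow> v \<in> qhom Q A C \<Longrightarrow> qlimp Q v u \<in> qhom Q B C"
proof -
  assume "u \<in> qhom Q A B" "v \<in> qhom Q A C"
  then have "qcod Q u = B" "qcod Q v = C" by (simp_all add: qhom_def)
  then show ?thesis
    unfolding qlimp_def using qsup_in_qhom[of "{w \<in> qhom Q B C. w \<cdot> u \<sqsubseteq> v}" B C] by auto
qed

lemma qle_qlimp_iff:
  assumes u: "u \<in> qhom Q A B" and v: "v \<in> qhom Q A C" and w: "w \<in> qhom Q B C"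
  shows "w \<sqsubseteq> qlimp Q v u \<longleftrightarrow> w \<cdot> u \<sqsubseteq> v"
proof -
  define S where "S = {w \<in> qhom Q B C. w \<cdot> u \<sqsubseteq> v}"
  have S: "S \<subseteq> qhom Q B C" unfolding S_def by auto
  have limp: "qlimp Q v u = qsup Q B C S"
    using u v unfolding qlimp_def S_def qhom_def by simp
  show ?thesis
  proof
    assume "w \<sqsubseteq> qlimp Q v u"
    then have "w \<cdot> u \<sqsubseteq> qsup Q B C S \<cdot> u"
      using qcomp_mono_left qsup_in_qhom[OF S] u limp by metis
    also have "\<dots> = qsup Q A C ((\<lambda>g. g \<cdot> u) ` S)" using qsup_qcomp u S by blast
    also have "\<dots> \<sqsubseteq> v"
      by (rule qsup_least) (use S u v qcomp_in_qhom in \<open>auto simp: S_def\<close>)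
    finally show "w \<cdot> u \<sqsubseteq> v" .
  next
    assume "w \<cdot> u \<sqsubseteq> v"
    then show "w \<sqsubseteq> qlimp Q v u"
      unfolding limp by (intro qsup_upper[OF S]) (simp add: S_def w)
  qed
qed

lemma qrimp_in_qhom: "v \<in> qhom Q B C \<Longrightarrow> w \<in> qhom Q A C \<Longrightarrow> qrimp Q v w \<in> qhom Q A B"
proof -
  assume "v \<in> qhom Q B C" "w \<in> qhom Q A C"
  then have "qdom Q w = A" "qdom Q v = B" by (simp_all add: qhom_def)
  then show ?thesis
    unfolding qrimp_def using qsup_in_qhom[of "{u \<in> qhom Q A B. v \<cdot> u \<sqsubseteq> w}" A B] by auto
qed

lemma qle_qrimp_iff:
  assumes v: "v \<in> qhom Q B C" and w: "w \<in> qhom Q A C" and u: "u \<in> qhom Q A B"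
  shows "u \<sqsubseteq> qrimp Q v w \<longleftrightarrow> v \<cdot> u \<sqsubseteq> w"
proof -
  define S where "S = {u \<in> qhom Q A B. v \<cdot> u \<sqsubseteq> w}"
  have S: "S \<subseteq> qhom Q A B" unfolding S_def by auto
  have rimp: "qrimp Q v w = qsup Q A B S"
    using v w unfolding qrimp_def S_def qhom_def by simp
  show ?thesis
  proof
    assume "u \<sqsubseteq> qrimp Q v w"
    then have "v \<cdot> u \<sqsubseteq> v \<cdot> qsup Q A B S"
      using qcomp_mono_right qsup_in_qhom[OF S] v rimp by metis
    also have "\<dots> = qsup Q A C ((\<lambda>g. v \<cdot> g) ` S)" using qcomp_qsup v S by blast
    also have "\<dots> \<sqsubseteq> w"
      by (rule qsup_least) (use S v w qcomp_in_qhom in \<open>auto simp: S_def\<close>)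
    finally show "v \<cdot> u \<sqsubseteq> w" .
  next
    assume "v \<cdot> u \<sqsubseteq> w"
    then show "u \<sqsubseteq> qrimp Q v w"
      unfolding rimp by (intro qsup_upper[OF S]) (simp add: S_def u)
  qed
qed

lemma qinf_qlimp_qcomp_le:
  assumes "\<And>X. X \<in> I \<Longrightarrow> u X \<in> qhom Q (a X) T" "\<And>X. X \<in> I \<Longrightarrow> v X \<in> qhom Q (a X) T'"
    and "X \<in> I"
  shows "qinf Q T T' {qlimp Q (v X) (u X) | X. X \<in> I} \<cdot> u X \<sqsubseteq> v X"
proof -
  have "qinf Q T T' {qlimp Q (v X) (u X) | X. X \<in> I} \<sqsubseteq> qlimp Q (v X) (u X)"
    by (rule qinf_lower) (use assms qlimp_in_qhom in blast)+
  then show ?thesis using qle_qlimp_iff assms qinf_in_qhom by blast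
qed

lemma qinf_qlimp_greatest:
  assumes "\<And>X. X \<in> I \<Longrightarrow> u X \<in> qhom Q (a X) T" "\<And>X. X \<in> I \<Longrightarrow> v X \<in> qhom Q (a X) T'"
    and "w \<in> qhom Q T T'" "\<And>X. X \<in> I \<Longrightarrow> w \<cdot> u X \<sqsubseteq> v X"
  shows "w \<sqsubseteq> qinf Q T T' {qlimp Q (v X) (u X) | X. X \<in> I}"
  by (rule qinf_greatest[OF assms(3)]) (use assms qle_qlimp_iff in blast)

lemma qinf_qrimp_qcomp_le:
  assumes "\<And>Y. Y \<in> I \<Longrightarrow> v Y \<in> qhom Q T (b Y)" "\<And>Y. Y \<in> I \<Longrightarrow> w Y \<in> qhom Q T' (b Y)"
    and "Y \<in> I"
  shows "v Y \<cdot> qinf Q T' T {qrimp Q (v Y) (w Y) | Y. Y \<in> I} \<sqsubseteq> w Y"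
proof -
  have "qinf Q T' T {qrimp Q (v Y) (w Y) | Y. Y \<in> I} \<sqsubseteq> qrimp Q (v Y) (w Y)"
    by (rule qinf_lower) (use assms qrimp_in_qhom in blast)+
  then show ?thesis using qle_qrimp_iff assms qinf_in_qhom by blast
qed

lemma qinf_qrimp_greatest:
  assumes "\<And>Y. Y \<in> I \<Longrightarrow> v Y \<in> qhom Q T (b Y)" "\<And>Y. Y \<in> I \<Longrightarrow> w Y \<in> qhom Q T' (b Y)"
    and "u \<in> qhom Q T' T" "\<And>Y. Y \<in> I \<Longrightarrow> v Y \<cdot> u \<sqsubseteq> w Y"
  shows "u \<sqsubseteq> qinf Q T' T {qrimp Q (v Y) (w Y) | Y. Y \<in> I}"
  by (rule qinf_greatest[OF assms(3)]) (use assms qle_qrimp_iff in blast)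

section \<open>Q-categories and presheaves\<close>

lemma qcategory_hom:
  "qcategory Q K \<Longrightarrow> X \<in> cob K \<Longrightarrow> Y \<in> cob K \<Longrightarrow> chom K X Y \<in> qhom Q (cext K X) (cext K Y)"
  unfolding qcategory_def by blast

lemma qcategory_id: "qcategory Q K \<Longrightarrow> X \<in> cob K \<Longrightarrow> qid Q (cext K X) \<sqsubseteq> chom K X X"
  unfolding qcategory_def by blast

lemma qcategory_comp: "qcategory Q K \<Longrightarrow> X \<in> cob K \<Longrightarrow> Y \<in> cob K \<Longrightarrow> Z \<in> cob K \<Longrightarrow>
    chom K Y Z \<cdot> chom K X Y \<sqsubseteq> chom K X Z"
  unfolding qcategory_def by blast

lemma qfunctor_ob: "qfunctor Q K L F \<Longrightarrow> X \<in> cob K \<Longrightarrow> F X \<in> cob L"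
  unfolding qfunctor_def by blast

lemma qfunctor_ext: "qfunctor Q K L F \<Longrightarrow> X \<in> cob K \<Longrightarrow> cext L (F X) = cext K X"
  unfolding qfunctor_def by blast

lemma qfunctor_le:
  "qfunctor Q K L F \<Longrightarrow> X \<in> cob K \<Longrightarrow> Y \<in> cob K \<Longrightarrow> chom K X Y \<sqsubseteq> chom L (F X) (F Y)"
  unfolding qfunctor_def by blast

lemma qiso_refl: "qcategory Q K \<Longrightarrow> X \<in> cob K \<Longrightarrow> qiso Q K X X"
  unfolding qiso_def using qcategory_id by simp

lemma qiso_sym: "qiso Q K X Y \<Longrightarrow> qiso Q K Y X"
  unfolding qiso_def by auto

lemma qiso_chom_source_le:
  assumes K: "qcategory Q K" and iso: "qiso Q K Z Z'" and W: "W \<in> cob K"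
  shows "chom K Z' W \<sqsubseteq> chom K Z W"
proof -
  from iso have Z: "Z \<in> cob K" and Z': "Z' \<in> cob K" and ext: "cext K Z' = cext K Z"
    and id: "qid Q (cext K Z) \<sqsubseteq> chom K Z Z'" unfolding qiso_def by auto
  have "chom K Z' W \<sqsubseteq> chom K Z' W \<cdot> chom K Z Z'"
    using qle_qcomp_right_if_qid_le[OF id] qcategory_hom[OF K] Z Z' W ext by metis
  also have "\<dots> \<sqsubseteq> chom K Z W" using qcategory_comp[OF K Z Z' W] .
  finally show ?thesis .
qed

lemma qiso_chom_source:
  "qcategory Q K \<Longrightarrow> qiso Q K Z Z' \<Longrightarrow> W \<in> cob K \<Longrightarrow> chom K Z W = chom K Z' W"
  using qiso_chom_source_le qiso_sym qle_antisym by metis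

lemma qiso_chom_target_le:
  assumes K: "qcategory Q K" and iso: "qiso Q K Z Z'" and W: "W \<in> cob K"
  shows "chom K W Z \<sqsubseteq> chom K W Z'"
proof -
  from iso have Z: "Z \<in> cob K" and Z': "Z' \<in> cob K" and ext: "cext K Z' = cext K Z"
    and id: "qid Q (cext K Z) \<sqsubseteq> chom K Z Z'" unfolding qiso_def by auto
  have "chom K W Z \<sqsubseteq> chom K Z Z' \<cdot> chom K W Z"
    using qle_qcomp_left_if_qid_le[OF id] qcategory_hom[OF K] Z Z' W ext by metis
  also have "\<dots> \<sqsubseteq> chom K W Z'" using qcategory_comp[OF K W Z Z'] .
  finally show ?thesis .
qed

lemma qiso_chom_target:
  "qcategory Q K \<Longrightarrow> qiso Q K Z Z' \<Longrightarrow> W \<in> cob K \<Longrightarrow> chom K W Z = chom K W Z'"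
  using qiso_chom_target_le qiso_sym qle_antisym by metis

lemma presheaf_in_qhom: "presheaf Q E T \<phi> \<Longrightarrow> X \<in> cob E \<Longrightarrow> \<phi> X \<in> qhom Q (cext E X) T"
  unfolding presheaf_def by blast

lemma presheaf_qcomp_le:
  "presheaf Q E T \<phi> \<Longrightarrow> X \<in> cob E \<Longrightarrow> X' \<in> cob E \<Longrightarrow> \<phi> X \<cdot> chom E X' X \<sqsubseteq> \<phi> X'"
  unfolding presheaf_def by blast

lemma presheaf_undefined: "presheaf Q E T \<phi> \<Longrightarrow> X \<notin> cob E \<Longrightarrow> \<phi> X = undefined"
  unfolding presheaf_def by blast

lemma psh_hom_eq:
  "psh_hom Q E (\<phi>, T) (\<psi>, T') = qinf Q T T' {qlimp Q (\<psi> X) (\<phi> X) | X. X \<in> cob E}"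
  unfolding psh_hom_def by simp

lemma psh_hom_in_qhom: "psh_hom Q E (\<phi>, T) (\<psi>, T') \<in> qhom Q T T'"
  unfolding psh_hom_eq by (rule qinf_in_qhom)

lemma psh_hom_qcomp_le:
  assumes "presheaf Q E T \<phi>" "presheaf Q E T' \<psi>" "X \<in> cob E"
  shows "psh_hom Q E (\<phi>, T) (\<psi>, T') \<cdot> \<phi> X \<sqsubseteq> \<psi> X"
  unfolding psh_hom_eq
  by (rule qinf_qlimp_qcomp_le[where a="cext E"]) (use assms presheaf_in_qhom in auto)

lemma psh_hom_greatest:
  assumes "presheaf Q E T \<phi>" "presheaf Q E T' \<psi>" "w \<in> qhom Q T T'"
    and "\<And>X. X \<in> cob E \<Longrightarrow> w \<cdot> \<phi> X \<sqsubseteq> \<psi> X"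
  shows "w \<sqsubseteq> psh_hom Q E (\<phi>, T) (\<psi>, T')"
  unfolding psh_hom_eq
  by (rule qinf_qlimp_greatest[where a="cext E"]) (use assms presheaf_in_qhom in auto)

lemma qcategory_of_presheaves:
  assumes "cob K \<subseteq> {(\<phi>, T). presheaf Q E T \<phi>}" "cext K = snd" "chom K = psh_hom Q E"
  shows "qcategory Q K"
  unfolding qcategory_def
proof (intro conjI ballI)
  fix p q assume "p \<in> cob K" "q \<in> cob K"
  show "chom K p q \<in> qhom Q (cext K p) (cext K q)"
    using assms(2,3) psh_hom_in_qhom by (metis prod.collapse)
next
  fix p assume "p \<in> cob K"
  then obtain \<phi> T where p: "p = (\<phi>, T)" and P: "presheaf Q E T \<phi>" using assms(1) by blast
  show "qid Q (cext K p) \<sqsubseteq> chom K p p"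
    unfolding p assms(2,3) snd_conv
    by (rule psh_hom_greatest[OF P P qid_in_qhom])
      (use qid_left presheaf_in_qhom[OF P] qle_refl in metis)
next
  fix p q r assume obs: "p \<in> cob K" "q \<in> cob K" "r \<in> cob K"
  obtain \<phi> \<psi> \<chi> T T' T'' where pqr: "p = (\<phi>, T)" "q = (\<psi>, T')" "r = (\<chi>, T'')"
    by (metis prod.exhaust)
  with obs assms(1) have P: "presheaf Q E T \<phi>" "presheaf Q E T' \<psi>" "presheaf Q E T'' \<chi>"
    by auto
  let ?a = "psh_hom Q E (\<psi>, T') (\<chi>, T'')" and ?b = "psh_hom Q E (\<phi>, T) (\<psi>, T')"
  have "?a \<cdot> ?b \<sqsubseteq> psh_hom Q E (\<phi>, T) (\<chi>, T'')"
  proof (rule psh_hom_greatest[OF P(1,3) qcomp_in_qhom[OF psh_hom_in_qhom psh_hom_in_qhom]])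
    fix X assume X: "X \<in> cob E"
    have "(?a \<cdot> ?b) \<cdot> \<phi> X = ?a \<cdot> (?b \<cdot> \<phi> X)"
      by (rule qcomp_assoc[OF presheaf_in_qhom[OF P(1) X] psh_hom_in_qhom psh_hom_in_qhom, symmetric])
    also have "\<dots> \<sqsubseteq> ?a \<cdot> \<psi> X"
      by (rule qcomp_mono_right[OF psh_hom_qcomp_le[OF P(1,2) X] presheaf_in_qhom[OF P(2) X]
            psh_hom_in_qhom])
    also have "\<dots> \<sqsubseteq> \<chi> X" by (rule psh_hom_qcomp_le[OF P(2,3) X])
    finally show "(?a \<cdot> ?b) \<cdot> \<phi> X \<sqsubseteq> \<chi> X" .
  qed
  then show "chom K q r \<cdot> chom K p q \<sqsubseteq> chom K p r" unfolding pqr assms(3) .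
qed

lemma yoneda_eq: "yoneda Q K Z = ((\<lambda>X. if X \<in> cob K then chom K X Z else undefined), cext K Z)"
  unfolding yoneda_def ..

lemma presheaf_yoneda:
  assumes K: "qcategory Q K" and Z: "Z \<in> cob K"
  shows "presheaf Q K (cext K Z) (fst (yoneda Q K Z))"
  unfolding presheaf_def yoneda_def
  using qcategory_hom[OF K _ Z] qcategory_comp[OF K _ _ Z] by simp

lemma yoneda_in_PSh: "qcategory Q K \<Longrightarrow> Z \<in> cob K \<Longrightarrow> yoneda Q K Z \<in> cob (PSh Q K)"
  using presheaf_yoneda by (simp add: PSh_def yoneda_def)

lemma psh_hom_yoneda:
  assumes K: "qcategory Q K" and X: "X \<in> cob K" and P: "presheaf Q K T \<phi>"
  shows "psh_hom Q K (yoneda Q K X) (\<phi>, T) = \<phi> X"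
proof (rule qle_antisym)
  have Y: "presheaf Q K (cext K X) (fst (yoneda Q K X))" by (rule presheaf_yoneda[OF K X])
  have y: "yoneda Q K X = (fst (yoneda Q K X), cext K X)" by (simp add: yoneda_def)
  let ?p = "psh_hom Q K (yoneda Q K X) (\<phi>, T)"
  have "?p \<sqsubseteq> ?p \<cdot> chom K X X"
    by (rule qle_qcomp_right_if_qid_le[OF qcategory_id[OF K X] qcategory_hom[OF K X X]])
      (subst y, rule psh_hom_in_qhom)
  also have "\<dots> \<sqsubseteq> \<phi> X"
    using psh_hom_qcomp_le[OF Y P X] X y by (simp add: yoneda_def)
  finally show "?p \<sqsubseteq> \<phi> X" .
  show "\<phi> X \<sqsubseteq> ?p"
    by (subst y, rule psh_hom_greatest[OF Y P presheaf_in_qhom[OF P X]])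
      (use presheaf_qcomp_le[OF P X] in \<open>simp add: yoneda_def\<close>)
qed

end

section \<open>Equivalences, totality and weighted (co)limits\<close>

definition qpseudo_inverse ::
  "('o, 'a, 'z) quantaloid_scheme \<Rightarrow> ('c, 'o, 'a) qcat \<Rightarrow> ('k, 'o, 'a) qcat \<Rightarrow> ('c \<Rightarrow> 'k) \<Rightarrow> 'k \<Rightarrow> 'c"
  where "qpseudo_inverse Q C K H p = (SOME Z. Z \<in> cob C \<and> qiso Q K (H Z) p)"

context quantaloid_setting
begin

lemma qequivalence_qfunctor: "qequivalence Q C K H \<Longrightarrow> qfunctor Q C K H"
  unfolding qequivalence_def by blast

lemma qequivalence_chom:
  "qequivalence Q C K H \<Longrightarrow> X \<in> cob C \<Longrightarrow> Y \<in> cob C \<Longrightarrow> chom K (H X) (H Y) = chom C X Y"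
  unfolding qequivalence_def by blast

lemma qpseudo_inverse:
  assumes "qequivalence Q C K H" "p \<in> cob K"
  shows "qpseudo_inverse Q C K H p \<in> cob C" "qiso Q K (H (qpseudo_inverse Q C K H p)) p"
proof -
  have "\<exists>Z. Z \<in> cob C \<and> qiso Q K (H Z) p" using assms unfolding qequivalence_def by blast
  then have "qpseudo_inverse Q C K H p \<in> cob C \<and> qiso Q K (H (qpseudo_inverse Q C K H p)) p"
    unfolding qpseudo_inverse_def by (rule someI_ex)
  then show "qpseudo_inverse Q C K H p \<in> cob C" "qiso Q K (H (qpseudo_inverse Q C K H p)) p"
    by auto
qed

lemma cext_qpseudo_inverse:
  assumes "qequivalence Q C K H" "p \<in> cob K"
  shows "cext C (qpseudo_inverse Q C K H p) = cext K p"
  using qpseudo_inverse[OF assms] qfunctor_ext[OF qequivalence_qfunctor[OF assms(1)]]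
  unfolding qiso_def by metis

lemma chom_qpseudo_inverse_source:
  assumes K: "qcategory Q K" and H: "qequivalence Q C K H" and p: "p \<in> cob K" and W: "W \<in> cob C"
  shows "chom C (qpseudo_inverse Q C K H p) W = chom K p (H W)"
proof -
  have HW: "H W \<in> cob K" by (rule qfunctor_ob[OF qequivalence_qfunctor[OF H] W])
  have "chom C (qpseudo_inverse Q C K H p) W = chom K (H (qpseudo_inverse Q C K H p)) (H W)"
    using qequivalence_chom[OF H] W qpseudo_inverse[OF H p] by simp
  also have "\<dots> = chom K p (H W)" by (rule qiso_chom_source[OF K qpseudo_inverse(2)[OF H p] HW])
  finally show ?thesis .
qed

lemma chom_qpseudo_inverse_target:
  assumes K: "qcategory Q K" and H: "qequivalence Q C K H" and p: "p \<in> cob K" and W: "W \<in> cob C"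
  shows "chom C W (qpseudo_inverse Q C K H p) = chom K (H W) p"
proof -
  have HW: "H W \<in> cob K" by (rule qfunctor_ob[OF qequivalence_qfunctor[OF H] W])
  have "chom C W (qpseudo_inverse Q C K H p) = chom K (H W) (H (qpseudo_inverse Q C K H p))"
    using qequivalence_chom[OF H] W qpseudo_inverse[OF H p] by simp
  also have "\<dots> = chom K (H W) p" by (rule qiso_chom_target[OF K qpseudo_inverse(2)[OF H p] HW])
  finally show ?thesis .
qed

lemma chom_qpseudo_inverse:
  assumes K: "qcategory Q K" and H: "qequivalence Q C K H" and p: "p \<in> cob K" and q: "q \<in> cob K"
  shows "chom C (qpseudo_inverse Q C K H p) (qpseudo_inverse Q C K H q) = chom K p q"
  using chom_qpseudo_inverse_source[OF K H p qpseudo_inverse(1)[OF H q]]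
    qiso_chom_target[OF K qpseudo_inverse(2)[OF H q] p] by simp

lemma qfunctor_id: "qfunctor Q C C id"
  unfolding qfunctor_def using qle_refl by simp

lemma wcolim_weight_le:
  assumes C: "qcategory Q C" and F: "qfunctor Q E C F" and P: "presheaf Q E T \<psi>"
    and colim: "is_wcolim Q E C F T \<psi> Z" and X: "X \<in> cob E"
  shows "\<psi> X \<sqsubseteq> chom C (F X) Z"
proof -
  have Z: "Z \<in> cob C" "cext C Z = T"
    and ZZ: "chom C Z Z = qinf Q T T {qlimp Q (chom C (F X) Z) (\<psi> X) | X. X \<in> cob E}"
    using colim unfolding is_wcolim_def by auto
  have FZ: "chom C (F X) Z \<in> qhom Q (cext E X) T" if "X \<in> cob E" for X
    using qcategory_hom[OF C qfunctor_ob[OF F that] Z(1)] qfunctor_ext[OF F that] Z(2) by simp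
  have "\<psi> X \<sqsubseteq> chom C Z Z \<cdot> \<psi> X"
    using qle_qcomp_left_if_qid_le[OF qcategory_id[OF C Z(1)] qcategory_hom[OF C Z(1) Z(1)]]
      presheaf_in_qhom[OF P X] Z(2) by simp
  also have "\<dots> \<sqsubseteq> chom C (F X) Z"
    unfolding ZZ by (rule qinf_qlimp_qcomp_le[where a="cext E"]) (use X presheaf_in_qhom[OF P] FZ in auto)
  finally show ?thesis .
qed

lemma wlim_weight_le:
  assumes C: "qcategory Q C" and G: "qfunctor Q D C G" and P: "\<forall>Y\<in>cob D. \<psi> Y \<in> qhom Q T (cext D Y)"
    and lim: "is_wlim Q D C G T \<psi> Z" and Y: "Y \<in> cob D"
  shows "\<psi> Y \<sqsubseteq> chom C Z (G Y)"
proof -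
  have Z: "Z \<in> cob C" "cext C Z = T"
    and ZZ: "chom C Z Z = qinf Q T T {qrimp Q (\<psi> Y) (chom C Z (G Y)) | Y. Y \<in> cob D}"
    using lim unfolding is_wlim_def by auto
  have ZG: "chom C Z (G Y) \<in> qhom Q T (cext D Y)" if "Y \<in> cob D" for Y
    using qcategory_hom[OF C Z(1) qfunctor_ob[OF G that]] qfunctor_ext[OF G that] Z(2) by simp
  have "\<psi> Y \<sqsubseteq> \<psi> Y \<cdot> chom C Z Z"
    using qle_qcomp_right_if_qid_le[OF qcategory_id[OF C Z(1)] qcategory_hom[OF C Z(1) Z(1)]]
      P Y Z(2) by auto
  also have "\<dots> \<sqsubseteq> chom C Z (G Y)"
    unfolding ZZ by (rule qinf_qrimp_qcomp_le[where b="cext D"]) (use Y P ZG in auto)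
  finally show ?thesis .
qed

lemma is_wcolim_id_iff:
  "is_wcolim Q C C id T l Z \<longleftrightarrow>
     Z \<in> cob C \<and> cext C Z = T \<and> (\<forall>W\<in>cob C. chom C Z W = psh_hom Q C (l, T) (yoneda Q C W))"
proof -
  have "{qlimp Q (chom C (id X) W) (l X) | X. X \<in> cob C} =
      {qlimp Q (fst (yoneda Q C W) X) (l X) | X. X \<in> cob C}" for W
    by (rule setcompr_cong) (simp add: yoneda_def)
  then show ?thesis
    unfolding is_wcolim_def yoneda_eq psh_hom_eq by (simp add: yoneda_def)
qed

lemma qfunctor_yoneda:
  assumes C: "qcategory Q C"
  shows "qfunctor Q C (PSh Q C) (yoneda Q C)"
  unfolding qfunctor_def
proof (intro conjI ballI)
  fix Z assume "Z \<in> cob C"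
  then show "yoneda Q C Z \<in> cob (PSh Q C)" "cext (PSh Q C) (yoneda Q C Z) = cext C Z"
    using yoneda_in_PSh[OF C] by (simp_all add: PSh_def yoneda_def)
next
  fix Z W assume Z: "Z \<in> cob C" and W: "W \<in> cob C"
  have "yoneda Q C W = (fst (yoneda Q C W), cext C W)" by (simp add: yoneda_def)
  then have "chom (PSh Q C) (yoneda Q C Z) (yoneda Q C W) = fst (yoneda Q C W) Z"
    using psh_hom_yoneda[OF C Z presheaf_yoneda[OF C W]] by (simp add: PSh_def)
  then show "chom C Z W \<sqsubseteq> chom (PSh Q C) (yoneda Q C Z) (yoneda Q C W)"
    using Z qle_refl by (simp add: yoneda_def)
qed

lemma total_imp_wcolim_id:
  assumes "total Q C" "presheaf Q C T l"
  shows "\<exists>Z. is_wcolim Q C C id T l Z"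
proof -
  obtain L where L: "qadjoint Q (PSh Q C) C L (yoneda Q C)" using assms(1) unfolding total_def by blast
  have l: "(l, T) \<in> cob (PSh Q C)" using assms(2) by (simp add: PSh_def)
  have "L (l, T) \<in> cob C" "cext C (L (l, T)) = T"
    using L l qfunctor_ob qfunctor_ext unfolding qadjoint_def by (fastforce simp: PSh_def)+
  moreover have "\<forall>W\<in>cob C. chom C (L (l, T)) W = psh_hom Q C (l, T) (yoneda Q C W)"
    using L l unfolding qadjoint_def by (simp add: PSh_def)
  ultimately show ?thesis unfolding is_wcolim_id_iff by blast
qed

lemma total_if_wcolim_id:
  assumes C: "qcategory Q C" and colim: "\<And>T l. presheaf Q C T l \<Longrightarrow> \<exists>Z. is_wcolim Q C C id T l Z"
  shows "total Q C"
proof -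
  define L where "L p = (SOME Z. is_wcolim Q C C id (snd p) (fst p) Z)" for p
  have PSh: "p \<in> cob (PSh Q C) \<longleftrightarrow> presheaf Q C (snd p) (fst p)" for p
    by (auto simp: PSh_def)
  have L: "is_wcolim Q C C id (snd p) (fst p) (L p)" if "p \<in> cob (PSh Q C)" for p
    unfolding L_def using colim that PSh by (metis someI_ex)
  have adj: "chom C (L p) W = chom (PSh Q C) p (yoneda Q C W)" if "p \<in> cob (PSh Q C)" "W \<in> cob C"
    for p W
    using L[OF that(1)] that(2) unfolding is_wcolim_id_iff by (simp add: PSh_def)
  have "qfunctor Q (PSh Q C) C L"
    unfolding qfunctor_def
  proof (intro conjI ballI)
    fix p assume "p \<in> cob (PSh Q C)"
    then show "L p \<in> cob C" "cext C (L p) = cext (PSh Q C) p"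
      using L unfolding is_wcolim_id_iff by (auto simp: PSh_def)
  next
    fix p p' assume p: "p \<in> cob (PSh Q C)" and p': "p' \<in> cob (PSh Q C)"
    obtain l T l' T' where pp': "p = (l, T)" "p' = (l', T')" by (metis prod.exhaust)
    have P: "presheaf Q C T l" "presheaf Q C T' l'" using p p' pp' PSh by auto
    have L': "L p' \<in> cob C" "cext C (L p') = T'" and L'colim: "is_wcolim Q C C id T' l' (L p')"
      using L[OF p'] pp' unfolding is_wcolim_id_iff by auto
    have y: "(fst (yoneda Q C (L p')), T') = yoneda Q C (L p')" by (simp add: yoneda_def L'(2))
    have "psh_hom Q C (l, T) (l', T') \<sqsubseteq> psh_hom Q C (l, T) (fst (yoneda Q C (L p')), T')"
    proof (rule psh_hom_greatest[OF P(1) _ psh_hom_in_qhom])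
      show "presheaf Q C T' (fst (yoneda Q C (L p')))" using presheaf_yoneda[OF C L'(1)] L'(2) by simp
      fix W assume W: "W \<in> cob C"
      have "psh_hom Q C (l, T) (l', T') \<cdot> l W \<sqsubseteq> l' W" by (rule psh_hom_qcomp_le[OF P W])
      also have "\<dots> \<sqsubseteq> chom C W (L p')"
        using wcolim_weight_le[OF C qfunctor_id P(2) L'colim W] by simp
      finally show "psh_hom Q C (l, T) (l', T') \<cdot> l W \<sqsubseteq> fst (yoneda Q C (L p')) W"
        using W by (simp add: yoneda_def)
    qed
    then show "chom (PSh Q C) p p' \<sqsubseteq> chom C (L p) (L p')"
      using adj[OF p L'(1)] pp' y by (simp add: PSh_def)
  qed
  then have "qadjoint Q (PSh Q C) C L (yoneda Q C)"
    unfolding qadjoint_def using qfunctor_yoneda[OF C] adj by blast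
  then show ?thesis unfolding total_def by blast
qed

lemma dense_chom_eq:
  assumes C: "qcategory Q C" and F: "qfunctor Q E C F" and dense: "dense Q E C F"
    and Z: "Z \<in> cob C" and W: "W \<in> cob C"
  shows "chom C Z W =
    qinf Q (cext C Z) (cext C W) {qlimp Q (chom C (F X) W) (chom C (F X) Z) | X. X \<in> cob E}"
proof -
  obtain T \<psi> Z' where P: "presheaf Q E T \<psi>" and colim: "is_wcolim Q E C F T \<psi> Z'"
    and iso: "qiso Q C Z Z'"
    using dense Z unfolding dense_def by blast
  have Z': "Z' \<in> cob C" "cext C Z' = T"
    and Z'W: "chom C Z' W = qinf Q T (cext C W) {qlimp Q (chom C (F X) W) (\<psi> X) | X. X \<in> cob E}"
    using colim W unfolding is_wcolim_def by auto
  have FZ': "chom C (F X) Z' \<in> qhom Q (cext E X) T" if "X \<in> cob E" for X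
    using qcategory_hom[OF C qfunctor_ob[OF F that] Z'(1)] qfunctor_ext[OF F that] Z'(2) by simp
  have FW: "chom C (F X) W \<in> qhom Q (cext E X) (cext C W)" if "X \<in> cob E" for X
    using qcategory_hom[OF C qfunctor_ob[OF F that] W] qfunctor_ext[OF F that] by simp
  let ?R = "qinf Q T (cext C W) {qlimp Q (chom C (F X) W) (chom C (F X) Z') | X. X \<in> cob E}"
  have "chom C Z' W \<sqsubseteq> ?R"
    by (rule qinf_qlimp_greatest[where a="cext E", OF FZ' FW])
      (use qcategory_hom[OF C Z'(1) W] Z'(2) qcategory_comp[OF C qfunctor_ob[OF F] Z'(1) W] in auto)
  moreover have "?R \<sqsubseteq> chom C Z' W"
    unfolding Z'W
  proof (rule qinf_qlimp_greatest[where a="cext E", OF presheaf_in_qhom[OF P] FW qinf_in_qhom])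
    fix X assume X: "X \<in> cob E"
    have "?R \<cdot> \<psi> X \<sqsubseteq> ?R \<cdot> chom C (F X) Z'"
      by (rule qcomp_mono_right[OF wcolim_weight_le[OF C F P colim X] FZ'[OF X] qinf_in_qhom])
    also have "\<dots> \<sqsubseteq> chom C (F X) W"
      by (rule qinf_qlimp_qcomp_le[where a="cext E", OF FZ' FW X])
    finally show "?R \<cdot> \<psi> X \<sqsubseteq> chom C (F X) W" .
  qed
  ultimately have "chom C Z' W = ?R" by (rule qle_antisym)
  moreover have "cext C Z = T" using iso Z'(2) unfolding qiso_def by simp
  ultimately show ?thesis
    using qiso_chom_source[OF C iso W] qiso_chom_target[OF C iso qfunctor_ob[OF F]]
    by (simp cong: setcompr_cong)
qed

lemma codense_chom_eq:
  assumes C: "qcategory Q C" and G: "qfunctor Q D C G" and codense: "codense Q D C G"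
    and Z: "Z \<in> cob C" and W: "W \<in> cob C"
  shows "chom C W Z =
    qinf Q (cext C W) (cext C Z) {qrimp Q (chom C Z (G Y)) (chom C W (G Y)) | Y. Y \<in> cob D}"
proof -
  obtain T \<psi> Z' where P: "covpresheaf Q D T \<psi>" and lim: "is_wlim Q D C G T \<psi> Z'"
    and iso: "qiso Q C Z Z'"
    using codense Z unfolding codense_def by blast
  have \<psi>: "\<forall>Y\<in>cob D. \<psi> Y \<in> qhom Q T (cext D Y)" using P unfolding covpresheaf_def by blast
  have Z': "Z' \<in> cob C" "cext C Z' = T"
    and WZ': "chom C W Z' = qinf Q (cext C W) T {qrimp Q (\<psi> Y) (chom C W (G Y)) | Y. Y \<in> cob D}"
    using lim W unfolding is_wlim_def by auto
  have Z'G: "chom C Z' (G Y) \<in> qhom Q T (cext D Y)" if "Y \<in> cob D" for Y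
    using qcategory_hom[OF C Z'(1) qfunctor_ob[OF G that]] qfunctor_ext[OF G that] Z'(2) by simp
  have WG: "chom C W (G Y) \<in> qhom Q (cext C W) (cext D Y)" if "Y \<in> cob D" for Y
    using qcategory_hom[OF C W qfunctor_ob[OF G that]] qfunctor_ext[OF G that] by simp
  let ?R = "qinf Q (cext C W) T {qrimp Q (chom C Z' (G Y)) (chom C W (G Y)) | Y. Y \<in> cob D}"
  have "chom C W Z' \<sqsubseteq> ?R"
    by (rule qinf_qrimp_greatest[where b="cext D", OF Z'G WG])
      (use qcategory_hom[OF C W Z'(1)] Z'(2) qcategory_comp[OF C W Z'(1) qfunctor_ob[OF G]] in auto)
  moreover have "?R \<sqsubseteq> chom C W Z'"
    unfolding WZ'
  proof (rule qinf_qrimp_greatest[where b="cext D", OF _ WG qinf_in_qhom])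
    fix Y assume Y: "Y \<in> cob D"
    show "\<psi> Y \<in> qhom Q T (cext D Y)" using \<psi> Y by blast
    have "\<psi> Y \<cdot> ?R \<sqsubseteq> chom C Z' (G Y) \<cdot> ?R"
      by (rule qcomp_mono_left[OF wlim_weight_le[OF C G \<psi> lim Y] Z'G[OF Y] qinf_in_qhom])
    also have "\<dots> \<sqsubseteq> chom C W (G Y)"
      by (rule qinf_qrimp_qcomp_le[where b="cext D", OF Z'G WG Y])
    finally show "\<psi> Y \<cdot> ?R \<sqsubseteq> chom C W (G Y)" .
  qed
  ultimately have "chom C W Z' = ?R" by (rule qle_antisym)
  moreover have "cext C Z = T" using iso Z'(2) unfolding qiso_def by simp
  ultimately show ?thesis
    using qiso_chom_target[OF C iso W] qiso_chom_source[OF C iso qfunctor_ob[OF G]]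
    by (simp cong: setcompr_cong)
qed

end

definition lim_weight ::
  "('o, 'a, 'z) quantaloid_scheme \<Rightarrow> ('d, 'o, 'a) qcat \<Rightarrow> ('c, 'o, 'a) qcat
     \<Rightarrow> ('d \<Rightarrow> 'c) \<Rightarrow> 'o \<Rightarrow> ('d \<Rightarrow> 'a) \<Rightarrow> 'c \<Rightarrow> 'a"
  where "lim_weight Q D C G T \<psi> = (\<lambda>W. if W \<in> cob C then
    qinf Q (cext C W) T {qrimp Q (\<psi> Y) (chom C W (G Y)) | Y. Y \<in> cob D} else undefined)"

context quantaloid_setting
begin

lemma lim_weight_qcomp_le:
  assumes C: "qcategory Q C" and G: "qfunctor Q D C G"
    and \<psi>: "\<forall>Y\<in>cob D. \<psi> Y \<in> qhom Q T (cext D Y)" and W: "W \<in> cob C" and Y: "Y \<in> cob D"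
  shows "\<psi> Y \<cdot> lim_weight Q D C G T \<psi> W \<sqsubseteq> chom C W (G Y)"
  using qinf_qrimp_qcomp_le[where b="cext D" and v=\<psi> and w="\<lambda>Y. chom C W (G Y)" and I="cob D"]
    \<psi> W Y qcategory_hom[OF C W qfunctor_ob[OF G]] qfunctor_ext[OF G]
  by (simp add: lim_weight_def)

lemma lim_weight_greatest:
  assumes C: "qcategory Q C" and G: "qfunctor Q D C G"
    and \<psi>: "\<forall>Y\<in>cob D. \<psi> Y \<in> qhom Q T (cext D Y)" and W: "W \<in> cob C"
    and a: "a \<in> qhom Q (cext C W) T" and le: "\<And>Y. Y \<in> cob D \<Longrightarrow> \<psi> Y \<cdot> a \<sqsubseteq> chom C W (G Y)"
  shows "a \<sqsubseteq> lim_weight Q D C G T \<psi> W"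
  using qinf_qrimp_greatest[where b="cext D" and v=\<psi> and w="\<lambda>Y. chom C W (G Y)" and I="cob D"]
    \<psi> W a le qcategory_hom[OF C W qfunctor_ob[OF G]] qfunctor_ext[OF G]
  by (simp add: lim_weight_def)

lemma presheaf_lim_weight:
  assumes C: "qcategory Q C" and G: "qfunctor Q D C G" and \<psi>: "\<forall>Y\<in>cob D. \<psi> Y \<in> qhom Q T (cext D Y)"
  shows "presheaf Q C T (lim_weight Q D C G T \<psi>)"
  unfolding presheaf_def
proof (intro conjI ballI allI impI)
  fix W W' assume W: "W \<in> cob C" and W': "W' \<in> cob C"
  let ?l = "lim_weight Q D C G T \<psi>"
  have l_in: "?l W \<in> qhom Q (cext C W) T" using W qinf_in_qhom by (simp add: lim_weight_def)
  show "?l W \<cdot> chom C W' W \<sqsubseteq> ?l W'"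
  proof (rule lim_weight_greatest[OF C G \<psi> W' qcomp_in_qhom[OF qcategory_hom[OF C W' W] l_in]])
    fix Y assume Y: "Y \<in> cob D"
    have GY: "G Y \<in> cob C" "cext C (G Y) = cext D Y" using qfunctor_ob[OF G Y] qfunctor_ext[OF G Y] by auto
    have "\<psi> Y \<cdot> (?l W \<cdot> chom C W' W) = (\<psi> Y \<cdot> ?l W) \<cdot> chom C W' W"
      using qcomp_assoc[OF qcategory_hom[OF C W' W] l_in] \<psi> Y by blast
    also have "\<dots> \<sqsubseteq> chom C W (G Y) \<cdot> chom C W' W"
      using qcomp_mono_left[OF lim_weight_qcomp_le[OF C G \<psi> W Y] _ qcategory_hom[OF C W' W]]
        qcategory_hom[OF C W GY(1)] GY(2) by simp
    also have "\<dots> \<sqsubseteq> chom C W' (G Y)" by (rule qcategory_comp[OF C W' W GY(1)])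
    finally show "\<psi> Y \<cdot> (?l W \<cdot> chom C W' W) \<sqsubseteq> chom C W' (G Y)" .
  qed
qed (simp_all add: qinf_in_qhom lim_weight_def)

text \<open>The limit of G weighted by \<open>\<psi>\<close> is the colimit of the identity weighted by
  \<open>lim_weight\<close>.\<close>

lemma total_imp_wlim:
  assumes C: "qcategory Q C" and total: "total Q C" and G: "qfunctor Q D C G"
    and \<psi>: "\<forall>Y\<in>cob D. \<psi> Y \<in> qhom Q T (cext D Y)"
  shows "\<exists>Z. is_wlim Q D C G T \<psi> Z"
proof -
  let ?l = "lim_weight Q D C G T \<psi>"
  have P: "presheaf Q C T ?l" by (rule presheaf_lim_weight[OF C G \<psi>])
  obtain Z where colim: "is_wcolim Q C C id T ?l Z" using total_imp_wcolim_id[OF total P] by blast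
  then have Z: "Z \<in> cob C" "cext C Z = T"
    and ZW: "\<And>W. W \<in> cob C \<Longrightarrow> chom C Z W = psh_hom Q C (?l, T) (yoneda Q C W)"
    unfolding is_wcolim_id_iff by auto
  have "chom C W Z = ?l W" if W: "W \<in> cob C" for W
  proof (rule qle_antisym)
    show "?l W \<sqsubseteq> chom C W Z" using wcolim_weight_le[OF C qfunctor_id P colim W] by simp
    show "chom C W Z \<sqsubseteq> ?l W"
    proof (rule lim_weight_greatest[OF C G \<psi> W])
      show WZ: "chom C W Z \<in> qhom Q (cext C W) T" using qcategory_hom[OF C W Z(1)] Z(2) by simp
      fix Y assume Y: "Y \<in> cob D"
      have GY: "G Y \<in> cob C" "cext C (G Y) = cext D Y" using qfunctor_ob[OF G Y] qfunctor_ext[OF G Y] by auto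
      have "\<psi> Y \<sqsubseteq> psh_hom Q C (?l, T) (fst (yoneda Q C (G Y)), cext C (G Y))"
        by (rule psh_hom_greatest[OF P presheaf_yoneda[OF C GY(1)]])
          (use \<psi> Y GY lim_weight_qcomp_le[OF C G \<psi> _ Y] in \<open>auto simp: yoneda_def\<close>)
      then have "\<psi> Y \<sqsubseteq> chom C Z (G Y)" using ZW[OF GY(1)] by (simp add: yoneda_def)
      then have "\<psi> Y \<cdot> chom C W Z \<sqsubseteq> chom C Z (G Y) \<cdot> chom C W Z"
        by (rule qcomp_mono_left) (use qcategory_hom[OF C Z(1) GY(1)] Z(2) GY(2) WZ in auto)
      also have "\<dots> \<sqsubseteq> chom C W (G Y)" by (rule qcategory_comp[OF C W Z(1) GY(1)])
      finally show "\<psi> Y \<cdot> chom C W Z \<sqsubseteq> chom C W (G Y)" .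
    qed
  qed
  then have "is_wlim Q D C G T \<psi> Z" unfolding is_wlim_def using Z by (simp add: lim_weight_def)
  then show ?thesis by blast
qed

end

definition restricted_yoneda :: "('e, 'o, 'a) qcat \<Rightarrow> ('c, 'o, 'a) qcat \<Rightarrow> ('e \<Rightarrow> 'c) \<Rightarrow> 'c \<Rightarrow> 'e \<Rightarrow> 'a"
  where "restricted_yoneda E C F Z = (\<lambda>X. if X \<in> cob E then chom C (F X) Z else undefined)"

context quantaloid_setting
begin

lemma presheaf_restricted_yoneda:
  assumes C: "qcategory Q C" and F: "qfunctor Q E C F" and Z: "Z \<in> cob C"
  shows "presheaf Q E (cext C Z) (restricted_yoneda E C F Z)"
  unfolding presheaf_def
proof (intro conjI ballI allI impI)
  fix X X' assume X: "X \<in> cob E" and X': "X' \<in> cob E"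
  have FXZ: "chom C (F X) Z \<in> qhom Q (cext C (F X)) (cext C Z)"
    by (rule qcategory_hom[OF C qfunctor_ob[OF F X] Z])
  have "chom C (F X) Z \<cdot> chom E X' X \<sqsubseteq> chom C (F X) Z \<cdot> chom C (F X') (F X)"
    by (rule qcomp_mono_right[OF qfunctor_le[OF F X' X] qcategory_hom[OF C] FXZ])
      (use qfunctor_ob[OF F] X X' in auto)
  also have "\<dots> \<sqsubseteq> chom C (F X') Z"
    by (rule qcategory_comp[OF C qfunctor_ob[OF F X'] qfunctor_ob[OF F X] Z])
  finally show "restricted_yoneda E C F Z X \<cdot> chom E X' X \<sqsubseteq> restricted_yoneda E C F Z X'"
    using X X' by (simp add: restricted_yoneda_def)
qed (use qcategory_hom[OF C qfunctor_ob[OF F] Z] qfunctor_ext[OF F] in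
      \<open>auto simp: restricted_yoneda_def\<close>)

lemma psh_hom_restricted_yoneda:
  assumes C: "qcategory Q C" and F: "qfunctor Q E C F" and dense: "dense Q E C F"
    and Z: "Z \<in> cob C" and W: "W \<in> cob C"
  shows "psh_hom Q E (restricted_yoneda E C F Z, cext C Z) (restricted_yoneda E C F W, cext C W)
    = chom C Z W"
  unfolding psh_hom_eq dense_chom_eq[OF C F dense Z W]
  by (simp add: restricted_yoneda_def cong: setcompr_cong)

end

text \<open>The colimit in \<open>P E\<close> of the diagram h weighted by the presheaf l on C, computed pointwise.\<close>

definition psh_colim ::
  "('o, 'a, 'z) quantaloid_scheme \<Rightarrow> ('e, 'o, 'a) qcat \<Rightarrow> ('c, 'o, 'a) qcat
     \<Rightarrow> ('c \<Rightarrow> 'e \<Rightarrow> 'a) \<Rightarrow> 'o \<Rightarrow> ('c \<Rightarrow> 'a) \<Rightarrow> 'e \<Rightarrow> 'a"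
  where "psh_colim Q E C h T l = (\<lambda>X. if X \<in> cob E then
    qsup Q (cext E X) T {qcomp Q (l W) (h W X) | W. W \<in> cob C} else undefined)"

context quantaloid_setting
begin

lemma psh_colim_terms_in_qhom:
  assumes h: "\<forall>W\<in>cob C. presheaf Q E (cext C W) (h W)" and l: "presheaf Q C T l" and X: "X \<in> cob E"
  shows "{l W \<cdot> h W X | W. W \<in> cob C} \<subseteq> qhom Q (cext E X) T"
proof clarify
  fix W assume W: "W \<in> cob C"
  then have "presheaf Q E (cext C W) (h W)" using h by blast
  then show "l W \<cdot> h W X \<in> qhom Q (cext E X) T"
    using qcomp_in_qhom[OF presheaf_in_qhom[OF _ X] presheaf_in_qhom[OF l W]] by blast
qed

lemma psh_colim_in_qhom:
  assumes h: "\<forall>W\<in>cob C. presheaf Q E (cext C W) (h W)" and l: "presheaf Q C T l" and X: "X \<in> cob E"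
  shows "psh_colim Q E C h T l X \<in> qhom Q (cext E X) T"
  using qsup_in_qhom[OF psh_colim_terms_in_qhom[OF assms]] X by (simp add: psh_colim_def)

lemma psh_colim_upper:
  assumes h: "\<forall>W\<in>cob C. presheaf Q E (cext C W) (h W)" and l: "presheaf Q C T l" and X: "X \<in> cob E"
    and W: "W \<in> cob C"
  shows "l W \<cdot> h W X \<sqsubseteq> psh_colim Q E C h T l X"
  using qsup_upper[OF psh_colim_terms_in_qhom[OF h l X]] X W by (auto simp: psh_colim_def)

lemma psh_colim_qcomp_le:
  assumes h: "\<forall>W\<in>cob C. presheaf Q E (cext C W) (h W)" and l: "presheaf Q C T l" and X: "X \<in> cob E"
    and w: "w \<in> qhom Q T T'" and v: "v \<in> qhom Q (cext E X) T'"
    and le: "\<And>W. W \<in> cob C \<Longrightarrow> w \<cdot> (l W \<cdot> h W X) \<sqsubseteq> v"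
  shows "w \<cdot> psh_colim Q E C h T l X \<sqsubseteq> v"
  using qcomp_qsup_le[OF w psh_colim_terms_in_qhom[OF h l X] v] le X by (auto simp: psh_colim_def)

lemma presheaf_psh_colim:
  assumes E: "qcategory Q E" and h: "\<forall>W\<in>cob C. presheaf Q E (cext C W) (h W)"
    and l: "presheaf Q C T l"
  shows "presheaf Q E T (psh_colim Q E C h T l)"
  unfolding presheaf_def
proof (intro conjI ballI allI impI)
  fix X X' assume X: "X \<in> cob E" and X': "X' \<in> cob E"
  have hX: "h W X \<in> qhom Q (cext E X) (cext C W)" if "W \<in> cob C" for W
    using presheaf_in_qhom[of E "cext C W" "h W" X] h that X by blast
  have "qsup Q (cext E X) T {l W \<cdot> h W X | W. W \<in> cob C} \<cdot> chom E X' X \<sqsubseteq> psh_colim Q E C h T l X'"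
  proof (rule qsup_qcomp_le[OF qcategory_hom[OF E X' X] psh_colim_terms_in_qhom[OF h l X]
        psh_colim_in_qhom[OF h l X']])
    fix s assume "s \<in> {l W \<cdot> h W X | W. W \<in> cob C}"
    then obtain W where W: "W \<in> cob C" and s: "s = l W \<cdot> h W X" by blast
    have "s \<cdot> chom E X' X = l W \<cdot> (h W X \<cdot> chom E X' X)"
      unfolding s by (rule qcomp_assoc[OF qcategory_hom[OF E X' X] hX[OF W] presheaf_in_qhom[OF l W],
            symmetric])
    also have "\<dots> \<sqsubseteq> l W \<cdot> h W X'"
    proof -
      have hW: "presheaf Q E (cext C W) (h W)" using h W by blast
      show ?thesis by (rule qcomp_mono_right[OF presheaf_qcomp_le[OF hW X X'] presheaf_in_qhom[OF hW X']
          presheaf_in_qhom[OF l W]])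
    qed
    also have "\<dots> \<sqsubseteq> psh_colim Q E C h T l X'" by (rule psh_colim_upper[OF h l X' W])
    finally show "s \<cdot> chom E X' X \<sqsubseteq> psh_colim Q E C h T l X'" .
  qed
  then show "psh_colim Q E C h T l X \<cdot> chom E X' X \<sqsubseteq> psh_colim Q E C h T l X'"
    using X by (simp add: psh_colim_def)
qed (use psh_colim_in_qhom[OF h l] in \<open>simp_all add: psh_colim_def\<close>)

lemma psh_hom_psh_colim_qcomp_le:
  assumes E: "qcategory Q E" and h: "\<forall>W\<in>cob C. presheaf Q E (cext C W) (h W)"
    and l: "presheaf Q C T l" and \<psi>: "presheaf Q E T' \<psi>" and W: "W \<in> cob C"
  shows "psh_hom Q E (psh_colim Q E C h T l, T) (\<psi>, T') \<cdot> l W \<sqsubseteq> psh_hom Q E (h W, cext C W) (\<psi>, T')"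
proof -
  let ?a = "psh_hom Q E (psh_colim Q E C h T l, T) (\<psi>, T')"
  have \<sigma>: "presheaf Q E T (psh_colim Q E C h T l)" by (rule presheaf_psh_colim[OF E h l])
  have hW: "presheaf Q E (cext C W) (h W)" using h W by blast
  show ?thesis
  proof (rule psh_hom_greatest[OF hW \<psi> qcomp_in_qhom[OF presheaf_in_qhom[OF l W] psh_hom_in_qhom]])
    fix X assume X: "X \<in> cob E"
    have "(?a \<cdot> l W) \<cdot> h W X = ?a \<cdot> (l W \<cdot> h W X)"
      by (rule qcomp_assoc[OF presheaf_in_qhom[OF hW X] presheaf_in_qhom[OF l W] psh_hom_in_qhom,
            symmetric])
    also have "\<dots> \<sqsubseteq> ?a \<cdot> psh_colim Q E C h T l X"
      by (rule qcomp_mono_right[OF psh_colim_upper[OF h l X W] presheaf_in_qhom[OF \<sigma> X]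
            psh_hom_in_qhom])
    also have "\<dots> \<sqsubseteq> \<psi> X" by (rule psh_hom_qcomp_le[OF \<sigma> \<psi> X])
    finally show "(?a \<cdot> l W) \<cdot> h W X \<sqsubseteq> \<psi> X" .
  qed
qed

lemma psh_hom_psh_colim:
  assumes E: "qcategory Q E" and C: "qcategory Q C"
    and h: "\<forall>W\<in>cob C. presheaf Q E (cext C W) (h W)"
    and ff: "\<And>W W'. W \<in> cob C \<Longrightarrow> W' \<in> cob C \<Longrightarrow>
      psh_hom Q E (h W', cext C W') (h W, cext C W) = chom C W' W"
    and l: "presheaf Q C T l" and W: "W \<in> cob C"
  shows "psh_hom Q E (psh_colim Q E C h T l, T) (h W, cext C W) = psh_hom Q C (l, T) (yoneda Q C W)"
proof -
  let ?a = "psh_hom Q E (psh_colim Q E C h T l, T) (h W, cext C W)"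
  let ?b = "psh_hom Q C (l, T) (fst (yoneda Q C W), cext C W)"
  have \<sigma>: "presheaf Q E T (psh_colim Q E C h T l)" by (rule presheaf_psh_colim[OF E h l])
  have hW: "presheaf Q E (cext C W) (h W)" using h W by blast
  have hv: "h W' X \<in> qhom Q (cext E X) (cext C W')" if "W' \<in> cob C" "X \<in> cob E" for W' X
    using presheaf_in_qhom[of E "cext C W'" "h W'" X] h that by blast
  have "?a \<sqsubseteq> ?b"
    by (rule psh_hom_greatest[OF l presheaf_yoneda[OF C W] psh_hom_in_qhom])
      (use psh_hom_psh_colim_qcomp_le[OF E h l hW] ff[OF W] in \<open>simp add: yoneda_def\<close>)
  moreover have "?b \<sqsubseteq> ?a"
  proof (rule psh_hom_greatest[OF \<sigma> hW psh_hom_in_qhom])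
    fix X assume X: "X \<in> cob E"
    show "?b \<cdot> psh_colim Q E C h T l X \<sqsubseteq> h W X"
    proof (rule psh_colim_qcomp_le[OF h l X psh_hom_in_qhom hv[OF W X]])
      fix W' assume W': "W' \<in> cob C"
      have "?b \<cdot> (l W' \<cdot> h W' X) = (?b \<cdot> l W') \<cdot> h W' X"
        by (rule qcomp_assoc[OF hv[OF W' X] presheaf_in_qhom[OF l W'] psh_hom_in_qhom])
      also have "\<dots> \<sqsubseteq> chom C W' W \<cdot> h W' X"
        using qcomp_mono_left[OF psh_hom_qcomp_le[OF l presheaf_yoneda[OF C W] W']
            _ hv[OF W' X]] qcategory_hom[OF C W' W] W' by (simp add: yoneda_def)
      also have "\<dots> \<sqsubseteq> h W X"
        using psh_hom_qcomp_le[OF _ hW X] h W' ff[OF W W'] by fastforce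
      finally show "?b \<cdot> (l W' \<cdot> h W' X) \<sqsubseteq> h W X" .
    qed
  qed
  ultimately show ?thesis by (simp add: qle_antisym yoneda_def)
qed

end

section \<open>The Isbell category of a distributor\<close>

locale distributor_setting = quantaloid_setting Q for Q :: "('o, 'a) quantaloid" +
  fixes E :: "('e, 'o, 'a) qcat" and D :: "('d, 'o, 'a) qcat" and \<Phi> :: "'e \<Rightarrow> 'd \<Rightarrow> 'a"
  assumes E: "qcategory Q E" and D: "qcategory Q D" and distributor: "distributor Q E D \<Phi>"
begin

abbreviation "up \<equiv> dist_up Q E D \<Phi>"
abbreviation "down \<equiv> dist_down Q E D \<Phi>"
abbreviation "cl T \<phi> \<equiv> down T (up T \<phi>)"
abbreviation "IB \<equiv> isbell Q E D \<Phi>"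

lemma distributor_in_qhom: "X \<in> cob E \<Longrightarrow> Y \<in> cob D \<Longrightarrow> \<Phi> X Y \<in> qhom Q (cext E X) (cext D Y)"
  using distributor unfolding distributor_def by blast

lemma distributor_qcomp_le:
  "X \<in> cob E \<Longrightarrow> X' \<in> cob E \<Longrightarrow> Y \<in> cob D \<Longrightarrow> Y' \<in> cob D \<Longrightarrow>
    chom D Y Y' \<cdot> (\<Phi> X Y \<cdot> chom E X' X) \<sqsubseteq> \<Phi> X' Y'"
  using distributor unfolding distributor_def by blast

lemma distributor_qcomp_left_le:
  assumes X: "X \<in> cob E" and Y: "Y \<in> cob D" and Y': "Y' \<in> cob D"
  shows "chom D Y Y' \<cdot> \<Phi> X Y \<sqsubseteq> \<Phi> X Y'"
proof -
  have "\<Phi> X Y \<sqsubseteq> \<Phi> X Y \<cdot> chom E X X"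
    by (rule qle_qcomp_right_if_qid_le[OF qcategory_id[OF E X] qcategory_hom[OF E X X]
          distributor_in_qhom[OF X Y]])
  then have "chom D Y Y' \<cdot> \<Phi> X Y \<sqsubseteq> chom D Y Y' \<cdot> (\<Phi> X Y \<cdot> chom E X X)"
    by (rule qcomp_mono_right[OF _ qcomp_in_qhom[OF qcategory_hom[OF E X X] distributor_in_qhom[OF X Y]]
          qcategory_hom[OF D Y Y']])
  also have "\<dots> \<sqsubseteq> \<Phi> X Y'" by (rule distributor_qcomp_le[OF X X Y Y'])
  finally show ?thesis .
qed

lemma distributor_qcomp_right_le:
  assumes X: "X \<in> cob E" and X': "X' \<in> cob E" and Y: "Y \<in> cob D"
  shows "\<Phi> X Y \<cdot> chom E X' X \<sqsubseteq> \<Phi> X' Y"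
proof -
  have "\<Phi> X Y \<cdot> chom E X' X \<sqsubseteq> chom D Y Y \<cdot> (\<Phi> X Y \<cdot> chom E X' X)"
    by (rule qle_qcomp_left_if_qid_le[OF qcategory_id[OF D Y] qcategory_hom[OF D Y Y]
          qcomp_in_qhom[OF qcategory_hom[OF E X' X] distributor_in_qhom[OF X Y]]])
  also have "\<dots> \<sqsubseteq> \<Phi> X' Y" by (rule distributor_qcomp_le[OF X X' Y Y])
  finally show ?thesis .
qed

lemma up_eq:
  "Y \<in> cob D \<Longrightarrow> up T \<phi> Y = qinf Q T (cext D Y) {qlimp Q (\<Phi> X Y) (\<phi> X) | X. X \<in> cob E}"
  unfolding dist_up_def by simp

lemma up_undefined: "Y \<notin> cob D \<Longrightarrow> up T \<phi> Y = undefined"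
  unfolding dist_up_def by simp

lemma up_in_qhom: "Y \<in> cob D \<Longrightarrow> up T \<phi> Y \<in> qhom Q T (cext D Y)"
  unfolding up_eq by (rule qinf_in_qhom)

lemma up_qcomp_le:
  assumes P: "presheaf Q E T \<phi>" and X: "X \<in> cob E" and Y: "Y \<in> cob D"
  shows "up T \<phi> Y \<cdot> \<phi> X \<sqsubseteq> \<Phi> X Y"
  unfolding up_eq[OF Y]
  by (rule qinf_qlimp_qcomp_le[where a="cext E"]) (use P X Y presheaf_in_qhom distributor_in_qhom in auto)

lemma up_greatest:
  assumes P: "presheaf Q E T \<phi>" and Y: "Y \<in> cob D" and a: "a \<in> qhom Q T (cext D Y)"
    and le: "\<And>X. X \<in> cob E \<Longrightarrow> a \<cdot> \<phi> X \<sqsubseteq> \<Phi> X Y"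
  shows "a \<sqsubseteq> up T \<phi> Y"
  unfolding up_eq[OF Y]
  by (rule qinf_qlimp_greatest[where a="cext E"]) (use P Y a le presheaf_in_qhom distributor_in_qhom in auto)

lemma down_eq:
  "X \<in> cob E \<Longrightarrow> down T \<psi> X = qinf Q (cext E X) T {qrimp Q (\<psi> Y) (\<Phi> X Y) | Y. Y \<in> cob D}"
  unfolding dist_down_def by simp

lemma down_undefined: "X \<notin> cob E \<Longrightarrow> down T \<psi> X = undefined"
  unfolding dist_down_def by simp

lemma down_in_qhom: "X \<in> cob E \<Longrightarrow> down T \<psi> X \<in> qhom Q (cext E X) T"
  unfolding down_eq by (rule qinf_in_qhom)

lemma down_qcomp_le:
  assumes \<psi>: "\<forall>Y\<in>cob D. \<psi> Y \<in> qhom Q T (cext D Y)" and X: "X \<in> cob E" and Y: "Y \<in> cob D"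
  shows "\<psi> Y \<cdot> down T \<psi> X \<sqsubseteq> \<Phi> X Y"
  unfolding down_eq[OF X]
  by (rule qinf_qrimp_qcomp_le[where b="cext D"]) (use \<psi> X Y distributor_in_qhom in auto)

lemma down_greatest:
  assumes \<psi>: "\<forall>Y\<in>cob D. \<psi> Y \<in> qhom Q T (cext D Y)" and X: "X \<in> cob E"
    and a: "a \<in> qhom Q (cext E X) T" and le: "\<And>Y. Y \<in> cob D \<Longrightarrow> \<psi> Y \<cdot> a \<sqsubseteq> \<Phi> X Y"
  shows "a \<sqsubseteq> down T \<psi> X"
  unfolding down_eq[OF X]
  by (rule qinf_qrimp_greatest[where b="cext D"]) (use \<psi> X a le distributor_in_qhom in auto)

lemma up_in_qhom_all: "\<forall>Y\<in>cob D. up T \<phi> Y \<in> qhom Q T (cext D Y)"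
  using up_in_qhom by blast

lemma le_cl:
  assumes P: "presheaf Q E T \<phi>" and X: "X \<in> cob E"
  shows "\<phi> X \<sqsubseteq> cl T \<phi> X"
  by (rule down_greatest[OF up_in_qhom_all X presheaf_in_qhom[OF P X]]) (erule up_qcomp_le[OF P X])

lemma presheaf_cl:
  assumes P: "presheaf Q E T \<phi>"
  shows "presheaf Q E T (cl T \<phi>)"
  unfolding presheaf_def
proof (intro conjI ballI allI impI)
  fix X X' assume X: "X \<in> cob E" and X': "X' \<in> cob E"
  show "cl T \<phi> X \<cdot> chom E X' X \<sqsubseteq> cl T \<phi> X'"
  proof (rule down_greatest[OF up_in_qhom_all X' qcomp_in_qhom[OF qcategory_hom[OF E X' X] down_in_qhom[OF X]]])
    fix Y assume Y: "Y \<in> cob D"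
    have "up T \<phi> Y \<cdot> (cl T \<phi> X \<cdot> chom E X' X) = (up T \<phi> Y \<cdot> cl T \<phi> X) \<cdot> chom E X' X"
      by (rule qcomp_assoc[OF qcategory_hom[OF E X' X] down_in_qhom[OF X] up_in_qhom[OF Y]])
    also have "\<dots> \<sqsubseteq> \<Phi> X Y \<cdot> chom E X' X"
      by (rule qcomp_mono_left[OF down_qcomp_le[OF up_in_qhom_all X Y] distributor_in_qhom[OF X Y]
            qcategory_hom[OF E X' X]])
    also have "\<dots> \<sqsubseteq> \<Phi> X' Y" by (rule distributor_qcomp_right_le[OF X X' Y])
    finally show "up T \<phi> Y \<cdot> (cl T \<phi> X \<cdot> chom E X' X) \<sqsubseteq> \<Phi> X' Y" .
  qed
qed (simp_all add: down_in_qhom down_undefined)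

lemma up_cl:
  assumes P: "presheaf Q E T \<phi>"
  shows "up T (cl T \<phi>) = up T \<phi>"
proof
  fix Y
  show "up T (cl T \<phi>) Y = up T \<phi> Y"
  proof (cases "Y \<in> cob D")
    case Y: True
    show ?thesis
    proof (rule qle_antisym)
      show "up T (cl T \<phi>) Y \<sqsubseteq> up T \<phi> Y"
      proof (rule up_greatest[OF P Y up_in_qhom[OF Y]])
        fix X assume X: "X \<in> cob E"
        have "up T (cl T \<phi>) Y \<cdot> \<phi> X \<sqsubseteq> up T (cl T \<phi>) Y \<cdot> cl T \<phi> X"
          by (rule qcomp_mono_right[OF le_cl[OF P X] down_in_qhom[OF X] up_in_qhom[OF Y]])
        also have "\<dots> \<sqsubseteq> \<Phi> X Y" by (rule up_qcomp_le[OF presheaf_cl[OF P] X Y])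
        finally show "up T (cl T \<phi>) Y \<cdot> \<phi> X \<sqsubseteq> \<Phi> X Y" .
      qed
      show "up T \<phi> Y \<sqsubseteq> up T (cl T \<phi>) Y"
        by (rule up_greatest[OF presheaf_cl[OF P] Y up_in_qhom[OF Y]])
          (rule down_qcomp_le[OF up_in_qhom_all _ Y])
    qed
  qed (simp add: up_undefined)
qed

lemma isbell_ob_iff: "(\<phi>, T) \<in> cob IB \<longleftrightarrow> presheaf Q E T \<phi> \<and> cl T \<phi> = \<phi>"
  unfolding isbell_def by simp

lemma cext_isbell: "cext IB = snd" and chom_isbell: "chom IB = psh_hom Q E"
  unfolding isbell_def by simp_all

lemma cl_in_isbell: "presheaf Q E T \<phi> \<Longrightarrow> (cl T \<phi>, T) \<in> cob IB"
  unfolding isbell_ob_iff using presheaf_cl up_cl by simp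

lemma qcategory_isbell: "qcategory Q IB"
  by (rule qcategory_of_presheaves) (auto simp: isbell_def)

lemma up_qcomp_psh_hom_le:
  assumes P': "presheaf Q E T' \<phi>'" and P: "presheaf Q E T \<phi>" and Y: "Y \<in> cob D"
  shows "up T \<phi> Y \<cdot> psh_hom Q E (\<phi>', T') (\<phi>, T) \<sqsubseteq> up T' \<phi>' Y"
proof (rule up_greatest[OF P' Y qcomp_in_qhom[OF psh_hom_in_qhom up_in_qhom[OF Y]]])
  fix X assume X: "X \<in> cob E"
  let ?a = "psh_hom Q E (\<phi>', T') (\<phi>, T)"
  have "(up T \<phi> Y \<cdot> ?a) \<cdot> \<phi>' X = up T \<phi> Y \<cdot> (?a \<cdot> \<phi>' X)"
    by (rule qcomp_assoc[OF presheaf_in_qhom[OF P' X] psh_hom_in_qhom up_in_qhom[OF Y], symmetric])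
  also have "\<dots> \<sqsubseteq> up T \<phi> Y \<cdot> \<phi> X"
    by (rule qcomp_mono_right[OF psh_hom_qcomp_le[OF P' P X] presheaf_in_qhom[OF P X] up_in_qhom[OF Y]])
  also have "\<dots> \<sqsubseteq> \<Phi> X Y" by (rule up_qcomp_le[OF P X Y])
  finally show "(up T \<phi> Y \<cdot> ?a) \<cdot> \<phi>' X \<sqsubseteq> \<Phi> X Y" .
qed

lemma psh_hom_cl_source:
  assumes P: "presheaf Q E T \<phi>" and closed: "(\<psi>, T') \<in> cob IB"
  shows "psh_hom Q E (cl T \<phi>, T) (\<psi>, T') = psh_hom Q E (\<phi>, T) (\<psi>, T')"
proof (rule qle_antisym)
  have P': "presheaf Q E T' \<psi>" and cl\<psi>: "cl T' \<psi> = \<psi>" using closed isbell_ob_iff by auto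
  have Pcl: "presheaf Q E T (cl T \<phi>)" by (rule presheaf_cl[OF P])
  let ?a = "psh_hom Q E (cl T \<phi>, T) (\<psi>, T')" and ?b = "psh_hom Q E (\<phi>, T) (\<psi>, T')"
  show "?a \<sqsubseteq> ?b"
  proof (rule psh_hom_greatest[OF P P' psh_hom_in_qhom])
    fix X assume X: "X \<in> cob E"
    have "?a \<cdot> \<phi> X \<sqsubseteq> ?a \<cdot> cl T \<phi> X"
      by (rule qcomp_mono_right[OF le_cl[OF P X] down_in_qhom[OF X] psh_hom_in_qhom])
    also have "\<dots> \<sqsubseteq> \<psi> X" by (rule psh_hom_qcomp_le[OF Pcl P' X])
    finally show "?a \<cdot> \<phi> X \<sqsubseteq> \<psi> X" .
  qed
  show "?b \<sqsubseteq> ?a"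
  proof (rule psh_hom_greatest[OF Pcl P' psh_hom_in_qhom])
    fix X assume X: "X \<in> cob E"
    have "?b \<cdot> cl T \<phi> X \<sqsubseteq> cl T' \<psi> X"
    proof (rule down_greatest[OF up_in_qhom_all X qcomp_in_qhom[OF down_in_qhom[OF X] psh_hom_in_qhom]])
      fix Y assume Y: "Y \<in> cob D"
      have up\<psi>: "up T' \<psi> Y \<cdot> ?b \<sqsubseteq> up T \<phi> Y" by (rule up_qcomp_psh_hom_le[OF P P' Y])
      have "up T' \<psi> Y \<cdot> (?b \<cdot> cl T \<phi> X) = (up T' \<psi> Y \<cdot> ?b) \<cdot> cl T \<phi> X"
        by (rule qcomp_assoc[OF down_in_qhom[OF X] psh_hom_in_qhom up_in_qhom[OF Y]])
      also have "\<dots> \<sqsubseteq> up T \<phi> Y \<cdot> cl T \<phi> X"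
        by (rule qcomp_mono_left[OF up\<psi> up_in_qhom[OF Y] down_in_qhom[OF X]])
      also have "\<dots> \<sqsubseteq> \<Phi> X Y" by (rule down_qcomp_le[OF up_in_qhom_all X Y])
      finally show "up T' \<psi> Y \<cdot> (?b \<cdot> cl T \<phi> X) \<sqsubseteq> \<Phi> X Y" .
    qed
    then show "?b \<cdot> cl T \<phi> X \<sqsubseteq> \<psi> X" using cl\<psi> by simp
  qed
qed

lemma psh_hom_cl_yoneda:
  assumes X: "X \<in> cob E" and closed: "(\<psi>, T) \<in> cob IB"
  shows "psh_hom Q E (cl (cext E X) (fst (yoneda Q E X)), cext E X) (\<psi>, T) = \<psi> X"
  using psh_hom_cl_source[OF presheaf_yoneda[OF E X] closed] psh_hom_yoneda[OF E X]
    closed isbell_ob_iff by (simp add: yoneda_def)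

definition column :: "'d \<Rightarrow> 'e \<Rightarrow> 'a" where
  "column Y = (\<lambda>X. if X \<in> cob E then \<Phi> X Y else undefined)"

lemma presheaf_column: "Y \<in> cob D \<Longrightarrow> presheaf Q E (cext D Y) (column Y)"
  unfolding presheaf_def column_def
  using distributor_in_qhom distributor_qcomp_right_le by simp

lemma column_in_isbell:
  assumes Y: "Y \<in> cob D"
  shows "(column Y, cext D Y) \<in> cob IB"
  unfolding isbell_ob_iff
proof (intro conjI presheaf_column[OF Y] ext)
  have P: "presheaf Q E (cext D Y) (column Y)" by (rule presheaf_column[OF Y])
  fix X
  show "cl (cext D Y) (column Y) X = column Y X"
  proof (cases "X \<in> cob E")
    case X: True
    have "qid Q (cext D Y) \<sqsubseteq> up (cext D Y) (column Y) Y"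
      by (rule up_greatest[OF P Y qid_in_qhom])
        (use qid_left[OF distributor_in_qhom[OF _ Y]] qle_refl in \<open>simp add: column_def\<close>)
    then have "cl (cext D Y) (column Y) X \<sqsubseteq> up (cext D Y) (column Y) Y \<cdot> cl (cext D Y) (column Y) X"
      by (rule qle_qcomp_left_if_qid_le[OF _ up_in_qhom[OF Y] down_in_qhom[OF X]])
    also have "\<dots> \<sqsubseteq> column Y X"
      using down_qcomp_le[OF up_in_qhom_all X Y] X by (simp add: column_def)
    finally show ?thesis by (rule qle_antisym[OF _ le_cl[OF P X]])
  qed (simp add: down_undefined column_def)
qed

lemma psh_hom_column:
  assumes P: "presheaf Q E T \<phi>" and Y: "Y \<in> cob D"
  shows "psh_hom Q E (\<phi>, T) (column Y, cext D Y) = up T \<phi> Y"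
  unfolding psh_hom_eq up_eq[OF Y] by (simp add: column_def cong: setcompr_cong)

lemma covpresheaf_up:
  assumes P: "presheaf Q E T \<phi>"
  shows "covpresheaf Q D T (up T \<phi>)"
  unfolding covpresheaf_def
proof (intro conjI ballI allI impI)
  fix Y Y' assume Y: "Y \<in> cob D" and Y': "Y' \<in> cob D"
  show "chom D Y Y' \<cdot> up T \<phi> Y \<sqsubseteq> up T \<phi> Y'"
  proof (rule up_greatest[OF P Y' qcomp_in_qhom[OF up_in_qhom[OF Y] qcategory_hom[OF D Y Y']]])
    fix X assume X: "X \<in> cob E"
    have "(chom D Y Y' \<cdot> up T \<phi> Y) \<cdot> \<phi> X = chom D Y Y' \<cdot> (up T \<phi> Y \<cdot> \<phi> X)"
      by (rule qcomp_assoc[OF presheaf_in_qhom[OF P X] up_in_qhom[OF Y] qcategory_hom[OF D Y Y'], symmetric])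
    also have "\<dots> \<sqsubseteq> chom D Y Y' \<cdot> \<Phi> X Y"
      by (rule qcomp_mono_right[OF up_qcomp_le[OF P X Y] distributor_in_qhom[OF X Y] qcategory_hom[OF D Y Y']])
    also have "\<dots> \<sqsubseteq> \<Phi> X Y'" by (rule distributor_qcomp_left_le[OF X Y Y'])
    finally show "(chom D Y Y' \<cdot> up T \<phi> Y) \<cdot> \<phi> X \<sqsubseteq> \<Phi> X Y'" .
  qed
qed (simp_all add: up_in_qhom up_undefined)

lemma psh_hom_closed_via_up:
  assumes P': "presheaf Q E T' \<phi>'" and closed: "(\<phi>, T) \<in> cob IB"
  shows "psh_hom Q E (\<phi>', T') (\<phi>, T) =
    qinf Q T' T {qrimp Q (up T \<phi> Y) (up T' \<phi>' Y) | Y. Y \<in> cob D}"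
proof (rule qle_antisym)
  have P: "presheaf Q E T \<phi>" and cl\<phi>: "cl T \<phi> = \<phi>" using closed isbell_ob_iff by auto
  let ?a = "psh_hom Q E (\<phi>', T') (\<phi>, T)"
  let ?b = "qinf Q T' T {qrimp Q (up T \<phi> Y) (up T' \<phi>' Y) | Y. Y \<in> cob D}"
  show "?a \<sqsubseteq> ?b"
  proof (rule qinf_qrimp_greatest[where b="cext D", OF up_in_qhom up_in_qhom psh_hom_in_qhom])
    fix Y assume Y: "Y \<in> cob D"
    show "up T \<phi> Y \<cdot> ?a \<sqsubseteq> up T' \<phi>' Y" by (rule up_qcomp_psh_hom_le[OF P' P Y])
  qed
  show "?b \<sqsubseteq> ?a"
  proof (rule psh_hom_greatest[OF P' P qinf_in_qhom])
    fix X assume X: "X \<in> cob E"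
    have "?b \<cdot> \<phi>' X \<sqsubseteq> cl T \<phi> X"
    proof (rule down_greatest[OF up_in_qhom_all X qcomp_in_qhom[OF presheaf_in_qhom[OF P' X] qinf_in_qhom]])
      fix Y assume Y: "Y \<in> cob D"
      have "up T \<phi> Y \<cdot> (?b \<cdot> \<phi>' X) = (up T \<phi> Y \<cdot> ?b) \<cdot> \<phi>' X"
        by (rule qcomp_assoc[OF presheaf_in_qhom[OF P' X] qinf_in_qhom up_in_qhom[OF Y]])
      also have "\<dots> \<sqsubseteq> up T' \<phi>' Y \<cdot> \<phi>' X"
        by (rule qcomp_mono_left[OF qinf_qrimp_qcomp_le[where b="cext D", OF up_in_qhom up_in_qhom Y]
              up_in_qhom[OF Y] presheaf_in_qhom[OF P' X]])
      also have "\<dots> \<sqsubseteq> \<Phi> X Y" by (rule up_qcomp_le[OF P' X Y])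
      finally show "up T \<phi> Y \<cdot> (?b \<cdot> \<phi>' X) \<sqsubseteq> \<Phi> X Y" .
    qed
    then show "?b \<cdot> \<phi>' X \<sqsubseteq> \<phi> X" using cl\<phi> by simp
  qed
qed

end

section \<open>Categories equivalent to the Isbell category\<close>

locale distributor_representation = distributor_setting Q E D \<Phi>
  for Q :: "('o, 'a) quantaloid" and E :: "('e, 'o, 'a) qcat" and D :: "('d, 'o, 'a) qcat"
    and \<Phi> :: "'e \<Rightarrow> 'd \<Rightarrow> 'a" +
  fixes C :: "('c, 'o, 'a) qcat" and F :: "'e \<Rightarrow> 'c" and G :: "'d \<Rightarrow> 'c"
  assumes C: "qcategory Q C" and F: "qfunctor Q E C F" and G: "qfunctor Q D C G"
    and represents: "\<forall>X\<in>cob E. \<forall>Y\<in>cob D. \<Phi> X Y = chom C (F X) (G Y)"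
begin

abbreviation "ry \<equiv> restricted_yoneda E C F"

lemma up_restricted_yoneda:
  assumes dense: "dense Q E C F" and Z: "Z \<in> cob C" and Y: "Y \<in> cob D"
  shows "up (cext C Z) (ry Z) Y = chom C Z (G Y)"
  using dense_chom_eq[OF C F dense Z qfunctor_ob[OF G Y]] qfunctor_ext[OF G Y] represents Y
  unfolding up_eq[OF Y] by (simp add: restricted_yoneda_def cong: setcompr_cong)

lemma restricted_yoneda_in_isbell:
  assumes dense: "dense Q E C F" and codense: "codense Q D C G" and Z: "Z \<in> cob C"
  shows "(ry Z, cext C Z) \<in> cob IB"
  unfolding isbell_ob_iff
proof (intro conjI presheaf_restricted_yoneda[OF C F Z] ext)
  fix X
  show "cl (cext C Z) (ry Z) X = ry Z X"
  proof (cases "X \<in> cob E")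
    case X: True
    have "cl (cext C Z) (ry Z) X = chom C (F X) Z"
      using codense_chom_eq[OF C G codense Z qfunctor_ob[OF F X]] qfunctor_ext[OF F X] represents X
      unfolding down_eq[OF X] by (simp add: up_restricted_yoneda[OF dense Z] cong: setcompr_cong)
    then show ?thesis using X by (simp add: restricted_yoneda_def)
  qed (simp add: down_undefined restricted_yoneda_def)
qed

lemma isbell_ob_eq_restricted_yoneda:
  assumes total: "total Q C" and p: "p \<in> cob IB"
  shows "\<exists>Z\<in>cob C. (ry Z, cext C Z) = p"
proof -
  obtain \<phi> T where p_eq: "p = (\<phi>, T)" by (cases p)
  have P: "presheaf Q E T \<phi>" and cl\<phi>: "cl T \<phi> = \<phi>" using p p_eq isbell_ob_iff by auto
  obtain Z where lim: "is_wlim Q D C G T (up T \<phi>) Z"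
    using total_imp_wlim[OF C total G up_in_qhom_all] by blast
  then have Z: "Z \<in> cob C" "cext C Z = T"
    and WZ: "\<And>W. W \<in> cob C \<Longrightarrow>
      chom C W Z = qinf Q (cext C W) T {qrimp Q (up T \<phi> Y) (chom C W (G Y)) | Y. Y \<in> cob D}"
    unfolding is_wlim_def by auto
  have "ry Z X = \<phi> X" for X
  proof (cases "X \<in> cob E")
    case X: True
    have "ry Z X = cl T \<phi> X"
      using WZ[OF qfunctor_ob[OF F X]] qfunctor_ext[OF F X] represents X
      unfolding down_eq[OF X] by (simp add: restricted_yoneda_def cong: setcompr_cong)
    then show ?thesis using cl\<phi> by simp
  qed (simp add: presheaf_undefined[OF P] restricted_yoneda_def)
  then show ?thesis using Z p_eq by auto
qed

lemma qequivalence_restricted_yoneda: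
  assumes total: "total Q C" and dense: "dense Q E C F" and codense: "codense Q D C G"
  shows "qequivalence Q C IB (\<lambda>Z. (ry Z, cext C Z))"
proof -
  have ff: "chom IB (ry Z, cext C Z) (ry W, cext C W) = chom C Z W" if "Z \<in> cob C" "W \<in> cob C"
    for Z W
    using psh_hom_restricted_yoneda[OF C F dense that] by (simp add: chom_isbell)
  have "\<exists>Z\<in>cob C. qiso Q IB (ry Z, cext C Z) p" if "p \<in> cob IB" for p
    using isbell_ob_eq_restricted_yoneda[OF total that] qiso_refl[OF qcategory_isbell that] by blast
  then show ?thesis
    unfolding qequivalence_def qfunctor_def
    using restricted_yoneda_in_isbell[OF dense codense] ff qle_refl by (simp add: cext_isbell)
qed

end

locale isbell_equivalence = distributor_setting Q E D \<Phi>
  for Q :: "('o, 'a) quantaloid" and E :: "('e, 'o, 'a) qcat" and D :: "('d, 'o, 'a) qcat"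
    and \<Phi> :: "'e \<Rightarrow> 'd \<Rightarrow> 'a" +
  fixes C :: "('c, 'o, 'a) qcat" and H :: "'c \<Rightarrow> ('e \<Rightarrow> 'a) \<times> 'o"
  assumes C: "qcategory Q C" and equivalence: "qequivalence Q C IB H"
begin

abbreviation "R \<equiv> qpseudo_inverse Q C IB H"
abbreviation "h W \<equiv> fst (H W)"

definition from_E :: "'e \<Rightarrow> 'c" where
  "from_E X = R (cl (cext E X) (fst (yoneda Q E X)), cext E X)"

definition from_D :: "'d \<Rightarrow> 'c" where
  "from_D Y = R (column Y, cext D Y)"

lemma H_eq: "W \<in> cob C \<Longrightarrow> H W = (h W, cext C W)"
  using qfunctor_ext[OF qequivalence_qfunctor[OF equivalence]] by (simp add: cext_isbell prod_eq_iff)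

lemma h_in_isbell: "W \<in> cob C \<Longrightarrow> (h W, cext C W) \<in> cob IB"
  using qfunctor_ob[OF qequivalence_qfunctor[OF equivalence]] H_eq by metis

lemma presheaf_h: "W \<in> cob C \<Longrightarrow> presheaf Q E (cext C W) (h W)"
  using h_in_isbell isbell_ob_iff by blast

lemma psh_hom_h: "Z \<in> cob C \<Longrightarrow> W \<in> cob C \<Longrightarrow> psh_hom Q E (h Z, cext C Z) (h W, cext C W) = chom C Z W"
  using qequivalence_chom[OF equivalence] H_eq by (metis chom_isbell)

lemma yoneda_cl_in_isbell: "X \<in> cob E \<Longrightarrow> (cl (cext E X) (fst (yoneda Q E X)), cext E X) \<in> cob IB"
  using cl_in_isbell presheaf_yoneda[OF E] by blast

lemma from_E_ob: "X \<in> cob E \<Longrightarrow> from_E X \<in> cob C"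
  unfolding from_E_def using qpseudo_inverse(1)[OF equivalence yoneda_cl_in_isbell] .

lemma from_D_ob: "Y \<in> cob D \<Longrightarrow> from_D Y \<in> cob C"
  unfolding from_D_def using qpseudo_inverse(1)[OF equivalence column_in_isbell] .

lemma chom_from_E_source:
  assumes X: "X \<in> cob E" and W: "W \<in> cob C"
  shows "chom C (from_E X) W = h W X"
proof -
  have "chom C (from_E X) W = psh_hom Q E (cl (cext E X) (fst (yoneda Q E X)), cext E X) (H W)"
    unfolding from_E_def chom_isbell[symmetric]
    by (rule chom_qpseudo_inverse_source[OF qcategory_isbell equivalence yoneda_cl_in_isbell[OF X] W])
  also have "\<dots> = h W X"
    by (subst H_eq[OF W]) (rule psh_hom_cl_yoneda[OF X h_in_isbell[OF W]])
  finally show ?thesis .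
qed

lemma chom_from_D_target:
  assumes W: "W \<in> cob C" and Y: "Y \<in> cob D"
  shows "chom C W (from_D Y) = up (cext C W) (h W) Y"
proof -
  have "chom C W (from_D Y) = psh_hom Q E (H W) (column Y, cext D Y)"
    unfolding from_D_def chom_isbell[symmetric]
    by (rule chom_qpseudo_inverse_target[OF qcategory_isbell equivalence column_in_isbell[OF Y] W])
  also have "\<dots> = up (cext C W) (h W) Y"
    by (subst H_eq[OF W]) (rule psh_hom_column[OF presheaf_h[OF W] Y])
  finally show ?thesis .
qed

lemma chom_from_E_from_D: "X \<in> cob E \<Longrightarrow> Y \<in> cob D \<Longrightarrow> chom C (from_E X) (from_D Y) = \<Phi> X Y"
  unfolding from_E_def from_D_def
  using chom_qpseudo_inverse[OF qcategory_isbell equivalence yoneda_cl_in_isbell column_in_isbell]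
    psh_hom_cl_yoneda column_in_isbell by (simp add: chom_isbell column_def)

lemma qfunctor_from_E: "qfunctor Q E C from_E"
  unfolding qfunctor_def
proof (intro conjI ballI)
  fix X assume X: "X \<in> cob E"
  show "from_E X \<in> cob C" by (rule from_E_ob[OF X])
  show "cext C (from_E X) = cext E X"
    unfolding from_E_def using cext_qpseudo_inverse[OF equivalence yoneda_cl_in_isbell[OF X]]
    by (simp add: cext_isbell)
next
  fix X X' assume X: "X \<in> cob E" and X': "X' \<in> cob E"
  have "chom C (from_E X) (from_E X') = cl (cext E X') (fst (yoneda Q E X')) X"
    unfolding from_E_def
    using chom_qpseudo_inverse[OF qcategory_isbell equivalence yoneda_cl_in_isbell[OF X]
        yoneda_cl_in_isbell[OF X']] psh_hom_cl_yoneda[OF X yoneda_cl_in_isbell[OF X']]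
    by (simp add: chom_isbell)
  then show "chom E X X' \<sqsubseteq> chom C (from_E X) (from_E X')"
    using le_cl[OF presheaf_yoneda[OF E X'] X] X by (simp add: yoneda_def)
qed

lemma qfunctor_from_D: "qfunctor Q D C from_D"
  unfolding qfunctor_def
proof (intro conjI ballI)
  fix Y assume Y: "Y \<in> cob D"
  show "from_D Y \<in> cob C" by (rule from_D_ob[OF Y])
  show "cext C (from_D Y) = cext D Y"
    unfolding from_D_def using cext_qpseudo_inverse[OF equivalence column_in_isbell[OF Y]]
    by (simp add: cext_isbell)
next
  fix Y Y' assume Y: "Y \<in> cob D" and Y': "Y' \<in> cob D"
  have "chom C (from_D Y) (from_D Y') = up (cext D Y) (column Y) Y'"
    unfolding from_D_def
    using chom_qpseudo_inverse[OF qcategory_isbell equivalence column_in_isbell[OF Y]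
        column_in_isbell[OF Y']] psh_hom_column[OF presheaf_column[OF Y] Y']
    by (simp add: chom_isbell)
  moreover have "chom D Y Y' \<sqsubseteq> up (cext D Y) (column Y) Y'"
    by (rule up_greatest[OF presheaf_column[OF Y] Y' qcategory_hom[OF D Y Y']])
      (use distributor_qcomp_left_le[OF _ Y Y'] in \<open>simp add: column_def\<close>)
  ultimately show "chom D Y Y' \<sqsubseteq> chom C (from_D Y) (from_D Y')" by simp
qed

lemma dense_from_E: "dense Q E C from_E"
  unfolding dense_def
proof
  fix Z assume Z: "Z \<in> cob C"
  have "is_wcolim Q E C from_E (cext C Z) (h Z) Z"
    unfolding is_wcolim_def
    using psh_hom_h[OF Z] chom_from_E_source
    by (simp add: Z psh_hom_eq cong: setcompr_cong)
  then show "\<exists>T \<phi> Z'. presheaf Q E T \<phi> \<and> is_wcolim Q E C from_E T \<phi> Z' \<and> qiso Q C Z Z'"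
    using presheaf_h[OF Z] qiso_refl[OF C Z] by blast
qed

lemma codense_from_D: "codense Q D C from_D"
  unfolding codense_def
proof
  fix Z assume Z: "Z \<in> cob C"
  have "is_wlim Q D C from_D (cext C Z) (up (cext C Z) (h Z)) Z"
    unfolding is_wlim_def
    using psh_hom_h[OF _ Z] psh_hom_closed_via_up[OF presheaf_h h_in_isbell[OF Z]] chom_from_D_target
    by (simp add: Z cong: setcompr_cong)
  then show "\<exists>T \<psi> Z'. covpresheaf Q D T \<psi> \<and> is_wlim Q D C from_D T \<psi> Z' \<and> qiso Q C Z Z'"
    using covpresheaf_up[OF presheaf_h[OF Z]] qiso_refl[OF C Z] by blast
qed

lemma C_total: "total Q C"
proof (rule total_if_wcolim_id[OF C])
  fix T l assume l: "presheaf Q C T l"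
  let ?\<sigma> = "psh_colim Q E C (\<lambda>W. h W) T l"
  have \<sigma>: "presheaf Q E T ?\<sigma>" by (rule presheaf_psh_colim[OF E _ l]) (use presheaf_h in blast)
  let ?Z = "R (cl T ?\<sigma>, T)"
  have "chom C ?Z W = psh_hom Q C (l, T) (yoneda Q C W)" if W: "W \<in> cob C" for W
  proof -
    have "chom C ?Z W = psh_hom Q E (?\<sigma>, T) (h W, cext C W)"
      using chom_qpseudo_inverse_source[OF qcategory_isbell equivalence cl_in_isbell[OF \<sigma>] W]
        psh_hom_cl_source[OF \<sigma> h_in_isbell[OF W]] H_eq[OF W] by (simp add: chom_isbell)
    also have "\<dots> = psh_hom Q C (l, T) (yoneda Q C W)"
      by (rule psh_hom_psh_colim[OF E C _ psh_hom_h l W]) (use presheaf_h in blast)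
    finally show ?thesis .
  qed
  then show "\<exists>Z. is_wcolim Q C C id T l Z"
    unfolding is_wcolim_id_iff
    using qpseudo_inverse(1)[OF equivalence cl_in_isbell[OF \<sigma>]]
      cext_qpseudo_inverse[OF equivalence cl_in_isbell[OF \<sigma>]] by (auto simp: cext_isbell)
qed

end

context distributor_setting
begin

lemma total_dense_codense_if_isbell_equivalence:
  assumes C: "qcategory Q C" and H: "qequivalence Q C IB H"
  shows "total Q C \<and> (\<exists>F G. qfunctor Q E C F \<and> qfunctor Q D C G \<and>
    (\<forall>X\<in>cob E. \<forall>Y\<in>cob D. \<Phi> X Y = chom C (F X) (G Y)) \<and> dense Q E C F \<and> codense Q D C G)"
proof -
  interpret isbell_equivalence Q E D \<Phi> C H
    by (unfold_locales) (fact C H)+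
  show ?thesis
    using C_total qfunctor_from_E qfunctor_from_D chom_from_E_from_D dense_from_E codense_from_D
    by metis
qed

lemma isbell_equivalence_if_total_dense_codense:
  assumes C: "qcategory Q C" and "total Q C" and "qfunctor Q E C F" and "qfunctor Q D C G"
    and "\<forall>X\<in>cob E. \<forall>Y\<in>cob D. \<Phi> X Y = chom C (F X) (G Y)"
    and "dense Q E C F" and "codense Q D C G"
  shows "\<exists>H. qequivalence Q C IB H"
proof -
  interpret distributor_representation Q E D \<Phi> C F G
    by (unfold_locales) (fact assms)+
  show ?thesis using qequivalence_restricted_yoneda assms by blast
qed

end

theorem theorem9p1:
  fixes Q :: "('o, 'a) quantaloid"
    and E :: "('e, 'o, 'a) qcat" and D :: "('d, 'o, 'a) qcat"
    and C :: "('c, 'o, 'a) qcat"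
    and \<Phi> :: "'e \<Rightarrow> 'd \<Rightarrow> 'a"
  assumes "quantaloid Q"
    and "qcategory Q E" and "qcategory Q D" and "qcategory Q C"
    and "distributor Q E D \<Phi>"
  shows "(\<exists>H. qequivalence Q C (isbell Q E D \<Phi>) H) \<longleftrightarrow>
    (total Q C \<and>
     (\<exists>F G. qfunctor Q E C F \<and> qfunctor Q D C G \<and>
        (\<forall>X\<in>cob E. \<forall>Y\<in>cob D. \<Phi> X Y = chom C (F X) (G Y)) \<and>
        dense Q E C F \<and> codense Q D C G))"
proof -
  interpret distributor_setting Q E D \<Phi>
    using assms by (unfold_locales) blast+
  show ?thesis
    using total_dense_codense_if_isbell_equivalence[OF assms(4)]
      isbell_equivalence_if_total_dense_codense[OF assms(4)] by blast
qed

end
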